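(* Let $A$ be a set of $n$ arms with best arm $a^\star$, and assume there is a unique $\epsilon$-best arm in $A$ (every arm other than $a^\star$ is $\epsilon$-far from $a^\star$). Then for all $\delta\le 0.05$ and $n\ge\max\{1/\delta^4,10^5\}$, \textsc{Simple Approximate Best Arm} $(\epsilon,\delta)$-learns a best arm with sample complexity at most $\frac{4n}{\epsilon^2}\log\frac{1}{\delta}$.
   Context: Setting: a set $A$ of $n$ arms; each arm $a$ has an unknown distribution supported on $[0,1]$ with mean $\mu(a)$; sampling $a$ returns an independent draw. $a^\star\in\arg\max_a\mu(a)$. An arm $a$ is $\eta$-close to $a^\star$ if $\mu(a^\star)-\mu(a)\le\eta$ and $\eta$-far otherwise; an $\epsilon$-best arm is one that is $\epsilon$-close to $a^\star$. An algorithm $(\epsilon,\delta)$-learns a best arm if it outputs an $\epsilon$-best arm with probability at least $1-\delta$; its sample complexity is the total number of samples it takes (integer rounding is ignored). $\log$ is natural. \textsc{Na\"ive Elimination}$(B,\epsilon,\delta)$: sample every arm of $B$ $\frac{2}{\epsilon^2}\log\frac{|B|}{\delta}$ times and output the arm with largest empirical mean. \textsc{Aggressive Elimination}$(A_0,\epsilon,\delta)$, with $n=|A_0|$, $\phi(n)=\sqrt{6\log n/n^{3/4}}$ and $t(n)=\left\lceil\frac{\log n+4\log 2}{4\log(1/(\delta+\phi(n)))}\right\rceil$: for $i=0,\ldots,t(n)$, take $(i+1)\left\lceil\frac{2}{\epsilon^2}\log\frac1\delta\right\rceil$ fresh samples of each arm of $A_i$ and let $A_{i+1}$ be the $\lfloor|A_i|(\delta+\phi(n))\rfloor$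 arms of $A_i$ with largest empirical means; output $A_{t(n)+1}$. \textsc{Simple Approximate Best Arm}$(A,\epsilon,\delta)$: compute $A_T=$ \textsc{Aggressive Elimination}$(A,\epsilon,\delta/2)$ and output \textsc{Na\"ive Elimination}$(A_T,\epsilon,\delta/e)$. *)

theory Defs
  imports "HOL-Probability.Probability"
begin

text \<open>Arms are elements of a linearly ordered type 'a; the order is only used to
break ties deterministically. A run of the algorithm is a deterministic function of
an outcome omega :: 'a \<times> nat \<Rightarrow> real, where omega (a, j) is the j-th
independent sample of arm a. Fresh samples are taken by using fresh indices j.\<close>

definition arm_mean :: "('a \<Rightarrow> real measure) \<Rightarrow> 'a \<Rightarrow> real" where
  "arm_mean D a = (\<integral>x. x \<partial>(D a))"

definition sample_space :: "'a set \<Rightarrow> ('a \<Rightarrow> real measure) \<Rightarrow> ('a \<times> nat \<Rightarrow> real) measure" where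
  "sample_space A D = PiM (A \<times> UNIV) (\<lambda>(a, j). D a)"

definition emp_mean :: "('a \<times> nat \<Rightarrow> real) \<Rightarrow> 'a \<Rightarrow> nat \<Rightarrow> nat \<Rightarrow> real" where
  "emp_mean \<omega> a off k = (\<Sum>j\<in>{off..<off + k}. \<omega> (a, j)) / real k"

text \<open>Arms of B sorted by decreasing score f; sort_key is stable, so ties are broken by the order on arms.\<close>
definition rank_list :: "('a::linorder \<Rightarrow> real) \<Rightarrow> 'a set \<Rightarrow> 'a list" where
  "rank_list f B = sort_key (\<lambda>a. - f a) (sorted_list_of_set B)"

definition top_k :: "('a::linorder \<Rightarrow> real) \<Rightarrow> 'a set \<Rightarrow> nat \<Rightarrow> 'a set" where
  "top_k f B k = set (take k (rank_list f B))"

definition naive_N :: "real \<Rightarrow> real \<Rightarrow> nat \<Rightarrow> nat" where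
  "naive_N \<epsilon> \<delta> b = nat \<lceil>2 / \<epsilon>\<^sup>2 * ln (real b / \<delta>)\<rceil>"

definition naive_elim :: "('a \<times> nat \<Rightarrow> real) \<Rightarrow> 'a::linorder set \<Rightarrow> real \<Rightarrow> real \<Rightarrow> nat \<Rightarrow> 'a" where
  "naive_elim \<omega> B \<epsilon> \<delta> off =
     hd (rank_list (\<lambda>a. emp_mean \<omega> a off (naive_N \<epsilon> \<delta> (card B))) B)"

definition naive_samples :: "'a set \<Rightarrow> real \<Rightarrow> real \<Rightarrow> nat" where
  "naive_samples B \<epsilon> \<delta> = card B * naive_N \<epsilon> \<delta> (card B)"

definition phi :: "nat \<Rightarrow> real" where
  "phi n = sqrt (6 * ln (real n) / (real n) powr (3/4))"

definition t_rounds :: "real \<Rightarrow> nat \<Rightarrow> nat" where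
  "t_rounds \<delta> n = nat \<lceil>(ln (real n) + 4 * ln 2) / (4 * ln (1 / (\<delta> + phi n)))\<rceil>"

definition agg_m :: "real \<Rightarrow> real \<Rightarrow> nat" where
  "agg_m \<epsilon> \<delta> = nat \<lceil>2 / \<epsilon>\<^sup>2 * ln (1 / \<delta>)\<rceil>"

definition agg_off :: "real \<Rightarrow> real \<Rightarrow> nat \<Rightarrow> nat" where
  "agg_off \<epsilon> \<delta> i = (\<Sum>j<i. (j + 1) * agg_m \<epsilon> \<delta>)"

fun agg_set :: "('a \<times> nat \<Rightarrow> real) \<Rightarrow> 'a::linorder set \<Rightarrow> real \<Rightarrow> real \<Rightarrow> nat \<Rightarrow> 'a set" where
  "agg_set \<omega> A0 \<epsilon> \<delta> 0 = A0"
| "agg_set \<omega> A0 \<epsilon> \<delta> (Suc i) =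
     (let B = agg_set \<omega> A0 \<epsilon> \<delta> i
      in top_k (\<lambda>a. emp_mean \<omega> a (agg_off \<epsilon> \<delta> i) ((i + 1) * agg_m \<epsilon> \<delta>)) B
               (nat \<lfloor>real (card B) * (\<delta> + phi (card A0))\<rfloor>))"

definition agg_elim :: "('a \<times> nat \<Rightarrow> real) \<Rightarrow> 'a::linorder set \<Rightarrow> real \<Rightarrow> real \<Rightarrow> 'a set" where
  "agg_elim \<omega> A0 \<epsilon> \<delta> = agg_set \<omega> A0 \<epsilon> \<delta> (Suc (t_rounds \<delta> (card A0)))"

definition agg_samples :: "('a \<times> nat \<Rightarrow> real) \<Rightarrow> 'a::linorder set \<Rightarrow> real \<Rightarrow> real \<Rightarrow> nat" where
  "agg_samples \<omega> A0 \<epsilon> \<delta> =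
     (\<Sum>i\<le>t_rounds \<delta> (card A0). card (agg_set \<omega> A0 \<epsilon> \<delta> i) * ((i + 1) * agg_m \<epsilon> \<delta>))"

definition saba :: "('a \<times> nat \<Rightarrow> real) \<Rightarrow> 'a::linorder set \<Rightarrow> real \<Rightarrow> real \<Rightarrow> 'a" where
  "saba \<omega> A \<epsilon> \<delta> =
     naive_elim \<omega> (agg_elim \<omega> A \<epsilon> (\<delta> / 2)) \<epsilon> (\<delta> / exp 1)
       (agg_off \<epsilon> (\<delta> / 2) (Suc (t_rounds (\<delta> / 2) (card A))))"

definition saba_samples :: "('a \<times> nat \<Rightarrow> real) \<Rightarrow> 'a::linorder set \<Rightarrow> real \<Rightarrow> real \<Rightarrow> nat" where
  "saba_samples \<omega> A \<epsilon> \<delta> =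
     agg_samples \<omega> A \<epsilon> (\<delta> / 2) + naive_samples (agg_elim \<omega> A \<epsilon> (\<delta> / 2)) \<epsilon> (\<delta> / exp 1)"

end

(*
  Round i of Aggressive Elimination draws (i + 1) m fresh samples of every surviving arm,
  m = \<lceil>2 \<epsilon>\<^sup>-\<^sup>2 ln (2 / \<delta>)\<rceil>, so by Hoeffding each estimate is off by \<epsilon> / 2 in the
  bad direction with probability at most p\<^sub>i = (\<delta> / 2)\<^sup>i\<^sup>+\<^sup>1. The best arm a\<^sup>* survives
  the round unless its own estimate is low, or at least c\<^sub>i\<^sub>+\<^sub>1 of the other c\<^sub>i survivors
  are estimated high. The survivors depend only on earlier samples, so conditionally on
  them these overestimation events are independent, and Chebyshev bounds the second case
  by c\<^sub>i p\<^sub>i / (c\<^sub>i\<^sub>+\<^sub>1 - c\<^sub>i p\<^sub>i)\<^sup>2. A union bound over the rounds and the final Naive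
  Elimination, whose sample size makes each of its estimates fail with probability
  \<delta> / (e c\<^sub>T), shows that a\<^sup>* is output with probability at least 1 - \<delta> once n \<ge> \<delta>\<^sup>-\<^sup>4;
  since every other arm is \<epsilon>-far, this is the correctness claim. The sample count is
  bounded by the deterministic sizes c\<^sub>i \<approx> n (\<delta> / 2 + \<phi>(n))\<^sup>i of the rounds.
*)

theory Submission
  imports Defs
begin

section \<open>Independence and concentration in product spaces\<close>

lemma (in product_prob_space) indep_vars_components:
  assumes "I \<noteq> {}"
  shows "P.indep_vars M (\<lambda>i \<omega>. \<omega> i) I"
proof -
  have "distr (PiM I M) (PiM I M) (\<lambda>\<omega>. \<lambda>i\<in>I. \<omega> i) = distr (PiM I M) (PiM I M) (\<lambda>\<omega>. \<omega>)"
    by (rule distr_cong) (auto simp: space_PiM PiE_def extensional_def restrict_def fun_eq_iff)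
  also have "\<dots> = PiM I M" by simp
  also have "\<dots> = (\<Pi>\<^sub>M i\<in>I. distr (PiM I M) (M i) (\<lambda>\<omega>. \<omega> i))"
    by (rule PiM_cong) (auto simp: PiM_component)
  finally show ?thesis
    using assms by (subst P.indep_vars_iff_distr_eq_PiM') (auto simp: measurable_component_singleton)
qed

text \<open>The set \<open>E'\<close> is obtained by filling the coordinates outside \<open>J\<close> with those of
  a fixed point \<open>\<omega>\<^sub>0\<close>.\<close>

lemma (in product_prob_space) event_eq_restrict_vimage:
  assumes E: "E \<in> sets (PiM I M)" and J: "J \<subseteq> I"
    and determined: "\<And>\<omega> \<omega>'. \<omega> \<in> space (PiM I M) \<Longrightarrow> \<omega>' \<in> space (PiM I M) \<Longrightarrow>
      (\<And>i. i \<in> J \<Longrightarrow> \<omega> i = \<omega>' i) \<Longrightarrow> \<omega> \<in> E \<Longrightarrow> \<omega>' \<in> E"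
  obtains E' where "E' \<in> sets (PiM J M)"
    and "E = (\<lambda>\<omega>. restrict \<omega> J) -` E' \<inter> space (PiM I M)"
proof -
  obtain \<omega>\<^sub>0 where \<omega>\<^sub>0: "\<omega>\<^sub>0 \<in> space (PiM I M)" using P.not_empty by blast
  define fill where "fill = (\<lambda>x. merge J (I - J) (x, restrict \<omega>\<^sub>0 (I - J)))"
  have "restrict \<omega>\<^sub>0 (I - J) \<in> space (PiM (I - J) M)" using \<omega>\<^sub>0 by (auto simp: space_PiM)
  then have "fill \<in> PiM J M \<rightarrow>\<^sub>M PiM (J \<union> (I - J)) M" unfolding fill_def by measurable
  then have fill: "fill \<in> PiM J M \<rightarrow>\<^sub>M PiM I M" using J by (simp add: Un_absorb1)
  have fill_space: "fill (restrict \<omega> J) \<in> space (PiM I M)" if "\<omega> \<in> space (PiM I M)" for \<omega>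
    using that J by (intro measurable_space[OF fill]) (auto simp: space_PiM)
  have fill_eq: "fill (restrict \<omega> J) i = \<omega> i" if "i \<in> J" for \<omega> i
    using that by (simp add: fill_def merge_def)
  show ?thesis
  proof
    show "fill -` E \<inter> space (PiM J M) \<in> sets (PiM J M)" using measurable_sets[OF fill E] .
    have E_iff: "\<omega> \<in> E \<longleftrightarrow> fill (restrict \<omega> J) \<in> E" if "\<omega> \<in> space (PiM I M)" for \<omega>
      using determined[OF that fill_space[OF that]] determined[OF fill_space[OF that] that] fill_eq
      by metis
    have restrict_space: "restrict \<omega> J \<in> space (PiM J M)" if "\<omega> \<in> space (PiM I M)" for \<omega>
      using that J by (auto simp: space_PiM)
    show "E = (\<lambda>\<omega>. restrict \<omega> J) -` (fill -` E \<inter> space (PiM J M)) \<inter> space (PiM I M)"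
    proof (intro set_eqI iffI)
      fix \<omega> assume "\<omega> \<in> E"
      moreover from this have "\<omega> \<in> space (PiM I M)" using sets.sets_into_space[OF E] by blast
      ultimately show "\<omega> \<in> (\<lambda>\<omega>. restrict \<omega> J) -` (fill -` E \<inter> space (PiM J M)) \<inter> space (PiM I M)"
        using E_iff restrict_space by simp
    next
      fix \<omega> assume "\<omega> \<in> (\<lambda>\<omega>. restrict \<omega> J) -` (fill -` E \<inter> space (PiM J M)) \<inter> space (PiM I M)"
      then show "\<omega> \<in> E" using E_iff by simp
    qed
  qed
qed

lemma (in product_prob_space) measure_Int_eq_mult_if_disjoint_coordinates:
  assumes I: "I \<noteq> {}" and E: "E \<in> sets (PiM I M)" and F: "F \<in> sets (PiM I M)"
    and J: "J\<^sub>E \<subseteq> I" "J\<^sub>F \<subseteq> I" "J\<^sub>E \<inter> J\<^sub>F = {}"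
    and E_determined: "\<And>\<omega> \<omega>'. \<omega> \<in> space (PiM I M) \<Longrightarrow> \<omega>' \<in> space (PiM I M) \<Longrightarrow>
      (\<And>i. i \<in> J\<^sub>E \<Longrightarrow> \<omega> i = \<omega>' i) \<Longrightarrow> \<omega> \<in> E \<Longrightarrow> \<omega>' \<in> E"
    and F_determined: "\<And>\<omega> \<omega>'. \<omega> \<in> space (PiM I M) \<Longrightarrow> \<omega>' \<in> space (PiM I M) \<Longrightarrow>
      (\<And>i. i \<in> J\<^sub>F \<Longrightarrow> \<omega> i = \<omega>' i) \<Longrightarrow> \<omega> \<in> F \<Longrightarrow> \<omega>' \<in> F"
  shows "measure (PiM I M) (E \<inter> F) = measure (PiM I M) E * measure (PiM I M) F"
proof -
  obtain E' where E': "E' \<in> sets (PiM J\<^sub>E M)" "E = (\<lambda>\<omega>. restrict \<omega> J\<^sub>E) -` E' \<inter> space (PiM I M)"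
    by (rule event_eq_restrict_vimage[OF E J(1) E_determined])
  obtain F' where F': "F' \<in> sets (PiM J\<^sub>F M)" "F = (\<lambda>\<omega>. restrict \<omega> J\<^sub>F) -` F' \<inter> space (PiM I M)"
    by (rule event_eq_restrict_vimage[OF F J(2) F_determined])
  have "P.indep_var (PiM J\<^sub>E M) (\<lambda>\<omega>. restrict (\<lambda>i. \<omega> i) J\<^sub>E) (PiM J\<^sub>F M) (\<lambda>\<omega>. restrict (\<lambda>i. \<omega> i) J\<^sub>F)"
    using J by (intro P.indep_var_restrict[OF indep_vars_components[OF I]]) auto
  moreover have "E \<inter> F = (\<lambda>\<omega>. (restrict \<omega> J\<^sub>E, restrict \<omega> J\<^sub>F)) -` (E' \<times> F') \<inter> space (PiM I M)"
    unfolding E'(2) F'(2) by auto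
  ultimately show ?thesis
    using P.indep_varD[OF _ E'(1) F'(1)] unfolding E'(2) F'(2) by simp
qed

lemma hoeffding_components:
  fixes M :: "'i \<Rightarrow> real measure"
  assumes "product_prob_space M" and K: "finite K" "K \<noteq> {}" "K \<subseteq> I"
    and sets_M: "\<And>i. i \<in> K \<Longrightarrow> sets (M i) = sets borel"
    and unit: "\<And>i. i \<in> K \<Longrightarrow> AE x in M i. x \<in> {0..1}"
    and s: "s \<ge> 0"
  defines "\<mu> \<equiv> (\<Sum>i\<in>K. \<integral>x. x \<partial>M i)"
  shows "measure (PiM I M) {\<omega> \<in> space (PiM I M). \<mu> + s \<le> (\<Sum>i\<in>K. \<omega> i)} \<le> exp (- 2 * s\<^sup>2 / card K)"
    and "measure (PiM I M) {\<omega> \<in> space (PiM I M). (\<Sum>i\<in>K. \<omega> i) \<le> \<mu> - s} \<le> exp (- 2 * s\<^sup>2 / card K)"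
proof -
  interpret product_prob_space M I by fact
  have "P.indep_vars M (\<lambda>i \<omega>. \<omega> i) K"
    using P.indep_vars_subset[OF indep_vars_components K(3)] K by blast
  then have indep: "P.indep_vars (\<lambda>_. borel) (\<lambda>i \<omega>. \<omega> i) K"
    by (rule P.indep_vars_compose2[where X = "\<lambda>i \<omega>. \<omega> i" and Y = "\<lambda>_ x. x", simplified])
      (simp add: sets_M cong: measurable_cong_sets)
  have "AE \<omega> in PiM I M. \<omega> i \<in> {0..1}" if "i \<in> K" for i
    using AE_component unit that K(3) by blast
  then interpret H: Hoeffding_ineq "PiM I M" K "\<lambda>i \<omega>. \<omega> i" "\<lambda>_. 0" "\<lambda>_. 1"
      "\<Sum>i\<in>K. P.expectation (\<lambda>\<omega>. \<omega> i)"
    by unfold_locales (use K indep in auto)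
  have "P.expectation (\<lambda>\<omega>. \<omega> i) = (\<integral>x. x \<partial>M i)" if "i \<in> K" for i
  proof -
    have "(\<integral>x. x \<partial>M i) = (\<integral>x. x \<partial>distr (PiM I M) (M i) (\<lambda>\<omega>. \<omega> i))"
      using PiM_component that K(3) by auto
    also have "\<dots> = P.expectation (\<lambda>\<omega>. \<omega> i)"
      using that K(3) by (subst integral_distr)
        (auto simp: measurable_component_singleton sets_M cong: measurable_cong_sets)
    finally show ?thesis by simp
  qed
  then have \<mu>: "(\<Sum>i\<in>K. P.expectation (\<lambda>\<omega>. \<omega> i)) = \<mu>" unfolding \<mu>_def by simp
  have pos: "(\<Sum>i\<in>K. (1 - 0)\<^sup>2) > (0::real)" using K by (simp add: card_gt_0_iff)
  show "measure (PiM I M) {\<omega> \<in> space (PiM I M). \<mu> + s \<le> (\<Sum>i\<in>K. \<omega> i)} \<le> exp (- 2 * s\<^sup>2 / card K)"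
    using H.Hoeffding_ineq_ge[OF s pos] by (simp add: \<mu>)
  show "measure (PiM I M) {\<omega> \<in> space (PiM I M). (\<Sum>i\<in>K. \<omega> i) \<le> \<mu> - s} \<le> exp (- 2 * s\<^sup>2 / card K)"
    using H.Hoeffding_ineq_le[OF s pos] by (simp add: \<mu>)
qed

text \<open>Pairwise independence makes the variance of the number of occurring events at most
  its mean, so Chebyshev's inequality applies.\<close>

lemma (in prob_space) prob_card_occurring_ge_le:
  fixes E :: "'b \<Rightarrow> 'a set" and p U k :: real
  assumes T: "finite T" and E: "\<And>b. b \<in> T \<Longrightarrow> E b \<in> events"
    and pairwise_indep: "\<And>b b'. b \<in> T \<Longrightarrow> b' \<in> T \<Longrightarrow> b \<noteq> b' \<Longrightarrow> prob (E b \<inter> E b') = prob (E b) * prob (E b')"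
    and p: "\<And>b. b \<in> T \<Longrightarrow> prob (E b) \<le> p"
    and U: "card T * p \<le> U" and k: "U < k"
  shows "prob {\<omega> \<in> space M. k \<le> card {b \<in> T. \<omega> \<in> E b}} \<le> U / (k - U)\<^sup>2"
proof -
  define N where "N = (\<lambda>\<omega>. \<Sum>b\<in>T. indicator (E b) \<omega> :: real)"
  define \<mu> where "\<mu> = (\<Sum>b\<in>T. prob (E b))"
  have N_eq: "N \<omega> = card {b \<in> T. \<omega> \<in> E b}" for \<omega>
    using T by (simp add: N_def indicator_def of_bool_def sum.If_cases Int_def)
  have N_sq: "(N \<omega>)\<^sup>2 = (\<Sum>b\<in>T. \<Sum>b'\<in>T. indicator (E b \<inter> E b') \<omega>)" for \<omega>
    by (simp add: N_def power2_eq_square sum_product indicator_inter_arith)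
  have int_N: "integrable M N" and int_N_sq: "integrable M (\<lambda>\<omega>. (N \<omega>)\<^sup>2)"
    unfolding N_sq using E by (auto simp: N_def emeasure_eq_measure)
  have EN: "expectation N = \<mu>"
    using E by (simp add: N_def \<mu>_def emeasure_eq_measure)
  have "expectation (\<lambda>\<omega>. (N \<omega>)\<^sup>2) = (\<Sum>b\<in>T. \<Sum>b'\<in>T. prob (E b \<inter> E b'))"
    unfolding N_sq using E by (simp add: emeasure_eq_measure sets.Int)
  also have "\<dots> = (\<Sum>b\<in>T. \<Sum>b'\<in>T. (if b = b' then prob (E b) - prob (E b) * prob (E b') else 0)
      + prob (E b) * prob (E b'))"
    by (intro sum.cong refl) (auto simp: pairwise_indep)
  also have "\<dots> = (\<Sum>b\<in>T. prob (E b) - prob (E b) * prob (E b)) + \<mu>\<^sup>2"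
    using T by (simp add: sum.distrib \<mu>_def power2_eq_square sum_product)
  finally have "variance N = (\<Sum>b\<in>T. prob (E b) - prob (E b) * prob (E b))"
    using variance_eq[OF int_N int_N_sq] EN by simp
  also have "\<dots> \<le> \<mu>" unfolding \<mu>_def by (intro sum_mono) auto
  finally have var_N: "variance N \<le> \<mu>" .
  have "0 \<le> \<mu>" unfolding \<mu>_def by (simp add: sum_nonneg)
  have "\<mu> \<le> U" unfolding \<mu>_def using sum_mono[of T "\<lambda>b. prob (E b)" "\<lambda>_. p", OF p] U by simp
  have N_rv: "random_variable borel N" using int_N by auto
  have "prob {\<omega> \<in> space M. k \<le> card {b \<in> T. \<omega> \<in> E b}} \<le> prob {\<omega> \<in> space M. k - \<mu> \<le> \<bar>N \<omega> - \<mu>\<bar>}"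
    using N_rv by (intro finite_measure_mono) (auto simp: N_eq[symmetric])
  also have "\<dots> \<le> variance N / (k - \<mu>)\<^sup>2"
    using Chebyshev_inequality[OF N_rv int_N_sq] \<open>\<mu> \<le> U\<close> k EN by simp
  also have "\<dots> \<le> \<mu> / (k - \<mu>)\<^sup>2"
    using var_N by (simp add: divide_right_mono)
  also have "\<dots> \<le> U / (k - U)\<^sup>2"
  proof -
    have "(k - U)\<^sup>2 \<le> (k - \<mu>)\<^sup>2" using \<open>\<mu> \<le> U\<close> k by (intro power_mono) auto
    then have "\<mu> * (k - U)\<^sup>2 \<le> U * (k - \<mu>)\<^sup>2"
      using \<open>0 \<le> \<mu>\<close> \<open>\<mu> \<le> U\<close> by (intro mult_mono) auto
    then show ?thesis using k \<open>\<mu> \<le> U\<close> by (simp add: divide_simps)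
  qed
  finally show ?thesis .
qed

lemma sets_Collect_card_occurring_ge:
  assumes "finite T" and "\<And>b. b \<in> T \<Longrightarrow> E b \<in> sets M"
  shows "{\<omega> \<in> space M. k \<le> card {b \<in> T. \<omega> \<in> E b}} \<in> sets M"
proof -
  have "real (card {b \<in> T. \<omega> \<in> E b}) = (\<Sum>b\<in>T. indicator (E b) \<omega>)" for \<omega>
    using assms(1) by (simp add: indicator_def of_bool_def sum.If_cases Int_def)
  then have "{\<omega> \<in> space M. k \<le> card {b \<in> T. \<omega> \<in> E b}} =
      {\<omega> \<in> space M. real k \<le> (\<Sum>b\<in>T. indicator (E b) \<omega>)}"
    by (metis (no_types) of_nat_le_iff)
  also have "\<dots> \<in> sets M"
    using assms by measurable
  finally show ?thesis .
qed

section \<open>Ranking arms\<close>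

lemma insort_key_cong_order:
  fixes f g :: "'a \<Rightarrow> 'b::linorder"
  assumes "\<forall>y\<in>insert x (set ys). \<forall>z\<in>insert x (set ys). f y \<le> f z \<longleftrightarrow> g y \<le> g z"
  shows "insort_key f x ys = insort_key g x ys"
  using assms by (induction ys) auto

lemma sort_key_cong_order:
  fixes f g :: "'a \<Rightarrow> 'b::linorder"
  assumes "\<forall>y\<in>set xs. \<forall>z\<in>set xs. f y \<le> f z \<longleftrightarrow> g y \<le> g z"
  shows "sort_key f xs = sort_key g xs"
  using assms
proof (induction xs)
  case (Cons x xs)
  then show ?case
    by (simp, intro insort_key_cong_order) (simp add: set_insort_key)
qed simp

lemma rank_list_cong_order:
  assumes "finite B" and "\<forall>b\<in>B. \<forall>c\<in>B. f b \<le> f c \<longleftrightarrow> g b \<le> g c"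
  shows "rank_list f B = rank_list g B"
  unfolding rank_list_def using assms by (intro sort_key_cong_order) auto

lemma top_k_cong_order:
  assumes "finite B" and "\<forall>b\<in>B. \<forall>c\<in>B. f b \<le> f c \<longleftrightarrow> g b \<le> g c"
  shows "top_k f B k = top_k g B k"
  unfolding top_k_def using rank_list_cong_order[OF assms] by simp

lemma
  assumes "finite B"
  shows distinct_rank_list: "distinct (rank_list f B)"
    and set_rank_list: "set (rank_list f B) = B"
    and length_rank_list: "length (rank_list f B) = card B"
    and sorted_rank_list: "sorted (map (\<lambda>a. - f a) (rank_list f B))"
  using assms by (auto simp: rank_list_def)

lemma top_k_subset: "finite B \<Longrightarrow> top_k f B k \<subseteq> B"
  unfolding top_k_def using set_rank_list by (metis set_take_subset)

lemma card_top_k: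
  assumes "finite B" shows "card (top_k f B k) = min k (card B)"
  unfolding top_k_def
  using distinct_rank_list[OF assms] length_rank_list[OF assms] by (simp add: distinct_card)

lemma mem_top_k_if_few_ahead:
  assumes B: "finite B" and a: "a \<in> B" and few: "card {b \<in> B - {a}. f a \<le> f b} < k"
  shows "a \<in> top_k f B k"
proof -
  define xs where "xs = rank_list f B"
  have "distinct xs" "set xs = B" "sorted (map (\<lambda>a. - f a) xs)"
    using distinct_rank_list[OF B] set_rank_list[OF B] sorted_rank_list[OF B] by (simp_all add: xs_def)
  obtain ys zs where xs: "xs = ys @ a # zs"
    using a \<open>set xs = B\<close> by (metis split_list)
  have "set ys \<subseteq> {b \<in> B - {a}. f a \<le> f b}"
    using \<open>distinct xs\<close> \<open>set xs = B\<close> \<open>sorted _\<close> unfolding xs by (auto simp: sorted_append)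
  then have "card (set ys) \<le> card {b \<in> B - {a}. f a \<le> f b}"
    using B by (intro card_mono) auto
  moreover have "card (set ys) = length ys" using \<open>distinct xs\<close> xs by (simp add: distinct_card)
  ultimately have "length ys < k" using few by linarith
  then have "a \<in> set (take k xs)"
    unfolding xs by (simp add: take_append) (cases "k - length ys", auto)
  then show ?thesis by (simp add: top_k_def xs_def)
qed

lemma hd_rank_list_eq_if_max:
  assumes B: "finite B" and a: "a \<in> B" and max: "\<And>b. b \<in> B \<Longrightarrow> b \<noteq> a \<Longrightarrow> f b < f a"
  shows "hd (rank_list f B) = a"
proof (rule ccontr)
  assume hd_ne: "hd (rank_list f B) \<noteq> a"
  obtain h xs where hxs: "rank_list f B = h # xs"
    using a set_rank_list[OF B, of f] by (cases "rank_list f B") auto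
  then have "a \<in> set xs" and "h \<in> B"
    using a set_rank_list[OF B, of f] hd_ne by auto
  then have "f a \<le> f h" using sorted_rank_list[OF B, of f] hxs by auto
  with max[OF \<open>h \<in> B\<close>] hd_ne hxs show False by fastforce
qed

lemma hd_rank_list_mem: "finite B \<Longrightarrow> B \<noteq> {} \<Longrightarrow> hd (rank_list f B) \<in> B"
  by (metis hd_in_set set_empty set_rank_list)

text \<open>The set is a finite union of events, each fixing the order pattern of the \<open>X b\<close>.\<close>

lemma sets_Collect_order_invariant:
  fixes X :: "'b \<Rightarrow> 'a \<Rightarrow> real" and G :: "('b \<Rightarrow> real) \<Rightarrow> 'c"
  assumes B: "finite B" and X: "\<And>b. b \<in> B \<Longrightarrow> X b \<in> borel_measurable M"
    and invariant: "\<And>f g. \<forall>b\<in>B. \<forall>c\<in>B. f b \<le> f c \<longleftrightarrow> g b \<le> g c \<Longrightarrow> G f = G g"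
  shows "{\<omega> \<in> space M. G (\<lambda>b. X b \<omega>) \<in> T} \<in> sets M"
proof -
  define pattern where "pattern = (\<lambda>f :: 'b \<Rightarrow> real. {(b, c) \<in> B \<times> B. f b \<le> f c})"
  define patterns where "patterns = {R \<in> Pow (B \<times> B). \<exists>f. pattern f = R \<and> G f \<in> T}"
  have "{\<omega> \<in> space M. G (\<lambda>b. X b \<omega>) \<in> T} =
      (\<Union>R\<in>patterns. {\<omega> \<in> space M. pattern (\<lambda>b. X b \<omega>) = R})"
  proof (intro equalityI subsetI)
    fix \<omega> assume "\<omega> \<in> (\<Union>R\<in>patterns. {\<omega> \<in> space M. pattern (\<lambda>b. X b \<omega>) = R})"
    then obtain f where "\<omega> \<in> space M" "pattern (\<lambda>b. X b \<omega>) = pattern f" "G f \<in> T"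
      unfolding patterns_def by auto
    moreover from this(2) have "\<forall>b\<in>B. \<forall>c\<in>B. X b \<omega> \<le> X c \<omega> \<longleftrightarrow> f b \<le> f c"
      unfolding pattern_def set_eq_iff by blast
    ultimately show "\<omega> \<in> {\<omega> \<in> space M. G (\<lambda>b. X b \<omega>) \<in> T}"
      using invariant[of "\<lambda>b. X b \<omega>" f] by auto
  qed (auto simp: patterns_def pattern_def)
  also have "\<dots> \<in> sets M"
  proof (intro sets.finite_UN)
    show "finite patterns" unfolding patterns_def using B by auto
    fix R assume "R \<in> patterns"
    have "{\<omega> \<in> space M. pattern (\<lambda>b. X b \<omega>) = R} =
      {\<omega> \<in> space M. \<forall>b\<in>B. \<forall>c\<in>B. X b \<omega> \<le> X c \<omega> \<longleftrightarrow> (b, c) \<in> R}"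
      using \<open>R \<in> patterns\<close> unfolding patterns_def pattern_def by auto
    also have "\<dots> \<in> sets M" using B X by measurable
    finally show "{\<omega> \<in> space M. pattern (\<lambda>b. X b \<omega>) = R} \<in> sets M" .
  qed
  finally show ?thesis .
qed

section \<open>Aggressive Elimination\<close>

fun agg_card :: "nat \<Rightarrow> real \<Rightarrow> nat \<Rightarrow> nat" where
  "agg_card n q 0 = n"
| "agg_card n q (Suc i) = nat \<lfloor>real (agg_card n q i) * q\<rfloor>"

lemma agg_off_Suc: "agg_off \<epsilon> \<delta> (Suc i) = agg_off \<epsilon> \<delta> i + (i + 1) * agg_m \<epsilon> \<delta>"
  by (simp add: agg_off_def)

lemma agg_off_mono: "i \<le> j \<Longrightarrow> agg_off \<epsilon> \<delta> i \<le> agg_off \<epsilon> \<delta> j"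
  unfolding agg_off_def by (intro sum_mono2) auto

lemma agg_set_subset:
  assumes "finite A" shows "agg_set \<omega> A \<epsilon> \<delta> i \<subseteq> A"
proof (induction i)
  case (Suc i)
  moreover from this have "finite (agg_set \<omega> A \<epsilon> \<delta> i)" using assms by (rule finite_subset)
  ultimately show ?case by (simp add: Let_def) (meson order_trans top_k_subset)
qed simp

lemma card_agg_set:
  assumes "finite A" and "0 \<le> \<delta> + phi (card A)" "\<delta> + phi (card A) \<le> 1"
  shows "card (agg_set \<omega> A \<epsilon> \<delta> i) = agg_card (card A) (\<delta> + phi (card A)) i"
proof (induction i)
  case (Suc i)
  define B where "B = agg_set \<omega> A \<epsilon> \<delta> i"
  have "finite B" unfolding B_def using agg_set_subset[OF assms(1)] assms(1) by (rule finite_subset)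
  have "real (card B) * (\<delta> + phi (card A)) \<le> card B"
    using assms by (simp add: mult_left_le)
  then have "nat \<lfloor>real (card B) * (\<delta> + phi (card A))\<rfloor> \<le> card B" by linarith
  then show ?case
    using Suc card_top_k[OF \<open>finite B\<close>] by (simp add: Let_def B_def[symmetric])
qed simp

lemma emp_mean_cong:
  "(\<And>j. off \<le> j \<Longrightarrow> j < off + k \<Longrightarrow> \<omega> (a, j) = \<omega>' (a, j)) \<Longrightarrow> emp_mean \<omega> a off k = emp_mean \<omega>' a off k"
  unfolding emp_mean_def by (intro arg_cong2[where f = "(/)"] sum.cong) auto

lemma agg_set_cong:
  assumes "finite A" and "\<And>a j. a \<in> A \<Longrightarrow> j < agg_off \<epsilon> \<delta> i \<Longrightarrow> \<omega> (a, j) = \<omega>' (a, j)"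
  shows "agg_set \<omega> A \<epsilon> \<delta> i = agg_set \<omega>' A \<epsilon> \<delta> i"
  using assms(2)
proof (induction i)
  case (Suc i)
  define B where "B = agg_set \<omega> A \<epsilon> \<delta> i"
  define X where "X = (\<lambda>\<omega> (b::'a). emp_mean \<omega> b (agg_off \<epsilon> \<delta> i) ((i + 1) * agg_m \<epsilon> \<delta>))"
  have "B \<subseteq> A" unfolding B_def by (rule agg_set_subset[OF assms(1)])
  then have B: "B \<subseteq> A" "finite B" using assms(1) finite_subset by auto
  have "agg_set \<omega> A \<epsilon> \<delta> i = agg_set \<omega>' A \<epsilon> \<delta> i"
    using Suc.prems agg_off_mono[of i "Suc i" \<epsilon> \<delta>] by (intro Suc.IH) auto
  then have "agg_set \<omega>' A \<epsilon> \<delta> i = B" by (simp add: B_def)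
  moreover have "\<forall>b\<in>B. X \<omega> b = X \<omega>' b"
    unfolding X_def using B Suc.prems by (auto intro!: emp_mean_cong simp: agg_off_Suc)
  then have "top_k (X \<omega>) B k = top_k (X \<omega>') B k" for k
    using B by (intro top_k_cong_order) auto
  ultimately show ?case by (simp add: Let_def B_def[symmetric] X_def)
qed simp

lemma ex_round_eliminating:
  assumes "a \<in> A" and "a \<notin> agg_set \<omega> A \<epsilon> \<delta> j"
  shows "\<exists>i<j. a \<in> agg_set \<omega> A \<epsilon> \<delta> i \<and> a \<notin> agg_set \<omega> A \<epsilon> \<delta> (Suc i)"
  using assms(2)
proof (induction j)
  case (Suc j)
  then show ?case by (cases "a \<in> agg_set \<omega> A \<epsilon> \<delta> j") (auto simp del: agg_set.simps intro: less_SucI)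
qed (use assms(1) in simp)

lemma saba_samples_eq:
  assumes "finite A" and "0 \<le> \<delta> / 2 + phi (card A)" "\<delta> / 2 + phi (card A) \<le> 1"
  defines "c \<equiv> agg_card (card A) (\<delta> / 2 + phi (card A))" and "t \<equiv> t_rounds (\<delta> / 2) (card A)"
  shows "saba_samples \<omega> A \<epsilon> \<delta> = (\<Sum>i\<le>t. c i * ((i + 1) * agg_m \<epsilon> (\<delta> / 2)))
    + c (Suc t) * naive_N \<epsilon> (\<delta> / exp 1) (c (Suc t))"
  using card_agg_set[OF assms(1-3)]
  by (simp add: saba_samples_def agg_samples_def naive_samples_def agg_elim_def c_def t_def
      del: agg_set.simps)

lemma saba_mem:
  assumes "finite A" and "agg_elim \<omega> A \<epsilon> (\<delta> / 2) \<noteq> {}"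
  shows "saba \<omega> A \<epsilon> \<delta> \<in> A"
proof -
  define B where "B = agg_elim \<omega> A \<epsilon> (\<delta> / 2)"
  have "B \<subseteq> A" unfolding B_def agg_elim_def by (rule agg_set_subset[OF assms(1)])
  moreover from this have "finite B" using assms(1) by (rule finite_subset)
  ultimately have "hd (rank_list f B) \<in> A" for f
    using hd_rank_list_mem assms(2) B_def by blast
  then show ?thesis by (simp add: saba_def naive_elim_def B_def)
qed

lemma exp_agg_m_le:
  assumes "0 < \<epsilon>" "0 < d"
  shows "exp (- real ((i + 1) * agg_m \<epsilon> d) * \<epsilon>\<^sup>2 / 2) \<le> d ^ (i + 1)"
proof -
  have "2 / \<epsilon>\<^sup>2 * ln (1 / d) \<le> agg_m \<epsilon> d" unfolding agg_m_def by linarith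
  then have "ln (1 / d) \<le> agg_m \<epsilon> d * \<epsilon>\<^sup>2 / 2" using assms by (simp add: field_simps)
  then have "real (i + 1) * ln (1 / d) \<le> real (i + 1) * (agg_m \<epsilon> d * \<epsilon>\<^sup>2 / 2)"
    by (rule mult_left_mono) simp
  then have "- real ((i + 1) * agg_m \<epsilon> d) * \<epsilon>\<^sup>2 / 2 \<le> real (i + 1) * ln d"
    using assms by (simp add: ln_div algebra_simps)
  then have "exp (- real ((i + 1) * agg_m \<epsilon> d) * \<epsilon>\<^sup>2 / 2) \<le> exp (real (i + 1) * ln d)" by simp
  also have "\<dots> = d ^ (i + 1)" using assms by (subst exp_of_nat_mult) simp
  finally show ?thesis .
qed

lemma exp_naive_N_le:
  assumes "0 < \<epsilon>" "0 < \<delta>" "0 < b"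
  shows "exp (- real (naive_N \<epsilon> \<delta> b) * \<epsilon>\<^sup>2 / 2) \<le> \<delta> / b"
proof -
  have "2 / \<epsilon>\<^sup>2 * ln (b / \<delta>) \<le> naive_N \<epsilon> \<delta> b" unfolding naive_N_def by linarith
  then have "ln (b / \<delta>) \<le> naive_N \<epsilon> \<delta> b * \<epsilon>\<^sup>2 / 2" using assms by (simp add: field_simps)
  then have "exp (- real (naive_N \<epsilon> \<delta> b) * \<epsilon>\<^sup>2 / 2) \<le> exp (- ln (b / \<delta>))" by simp
  also have "\<dots> = \<delta> / b" using assms by (simp add: exp_minus)
  finally show ?thesis .
qed

section \<open>The sample space\<close>

text \<open>The factors of \<^const>\<open>sample_space\<close> made total, so that they form a
  \<^locale>\<open>product_prob_space\<close>.\<close>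

definition sample_factors :: "'a set \<Rightarrow> ('a \<Rightarrow> real measure) \<Rightarrow> 'a \<times> nat \<Rightarrow> real measure" where
  "sample_factors A D = (\<lambda>(a, j). if a \<in> A then D a else return borel 0)"

locale arm_samples =
  fixes A :: "'a set" and D :: "'a \<Rightarrow> real measure"
  assumes arms_nonempty: "A \<noteq> {}"
    and prob_space_arm: "\<And>a. a \<in> A \<Longrightarrow> prob_space (D a)"
    and sets_arm: "\<And>a. a \<in> A \<Longrightarrow> sets (D a) = sets borel"
    and arm_unit: "\<And>a. a \<in> A \<Longrightarrow> AE x in D a. x \<in> {0..1}"
begin

abbreviation "\<Omega> \<equiv> sample_space A D"

lemma product_prob_space_factors: "product_prob_space (sample_factors A D)"
  by (rule product_prob_spaceI) (auto simp: sample_factors_def prob_space_arm prob_space_return)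

lemma sample_space_eq_PiM: "\<Omega> = PiM (A \<times> UNIV) (sample_factors A D)"
  unfolding sample_space_def by (rule PiM_cong) (auto simp: sample_factors_def)

sublocale prob_space \<Omega>
proof -
  interpret product_prob_space "sample_factors A D" "A \<times> UNIV"
    by (rule product_prob_space_factors)
  show "prob_space \<Omega>" unfolding sample_space_eq_PiM by (rule P.prob_space_axioms)
qed

lemma measurable_sample: "a \<in> A \<Longrightarrow> (\<lambda>\<omega>. \<omega> (a, j)) \<in> borel_measurable \<Omega>"
  unfolding sample_space_eq_PiM
  using measurable_component_singleton[of "(a, j)" "A \<times> UNIV" "sample_factors A D"]
  by (simp add: sample_factors_def sets_arm cong: measurable_cong_sets)

lemma arm_mean_nonneg: "a \<in> A \<Longrightarrow> 0 \<le> arm_mean D a"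
  and arm_mean_le_1: "a \<in> A \<Longrightarrow> arm_mean D a \<le> 1"
proof -
  assume "a \<in> A"
  then interpret D: prob_space "D a" by (rule prob_space_arm)
  have "AE x in D a. 0 \<le> x" "AE x in D a. x \<le> 1" using arm_unit[OF \<open>a \<in> A\<close>] by (auto elim: AE_mp)
  moreover have "integrable (D a) (\<lambda>x. x)"
    using arm_unit[OF \<open>a \<in> A\<close>] sets_arm[OF \<open>a \<in> A\<close>]
    by (intro D.integrable_const_bound[where B = 1]) (auto elim: AE_mp cong: measurable_cong_sets)
  ultimately show "0 \<le> arm_mean D a" "arm_mean D a \<le> 1"
    using integral_mono_AE[of "D a" "\<lambda>x. x" "\<lambda>_. 1"] unfolding arm_mean_def
    by (auto intro: integral_nonneg_AE simp: D.prob_space)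
qed

lemma
  assumes a: "a \<in> A" and s: "0 \<le> s"
  shows prob_emp_mean_ge_le:
      "prob {\<omega> \<in> space \<Omega>. arm_mean D a + s \<le> emp_mean \<omega> a off k} \<le> exp (- 2 * real k * s\<^sup>2)"
    and prob_emp_mean_le_le:
      "prob {\<omega> \<in> space \<Omega>. emp_mean \<omega> a off k \<le> arm_mean D a - s} \<le> exp (- 2 * real k * s\<^sup>2)"
proof -
  have "prob {\<omega> \<in> space \<Omega>. arm_mean D a + s \<le> emp_mean \<omega> a off k} \<le> exp (- 2 * real k * s\<^sup>2) \<and>
      prob {\<omega> \<in> space \<Omega>. emp_mean \<omega> a off k \<le> arm_mean D a - s} \<le> exp (- 2 * real k * s\<^sup>2)"
  proof (cases "k = 0")
    case False
    define K where "K = (\<lambda>j. (a, j)) ` {off..<off + k}"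
    have inj: "inj_on (\<lambda>j. (a, j)) {off..<off + k}" by (auto simp: inj_on_def)
    have K: "finite K" "K \<noteq> {}" "K \<subseteq> A \<times> UNIV" "card K = k"
      using False a card_image[OF inj] by (auto simp: K_def)
    have sum_K: "(\<Sum>i\<in>K. \<omega> i) = k * emp_mean \<omega> a off k" for \<omega> :: "'a \<times> nat \<Rightarrow> real"
      using False by (simp add: K_def sum.reindex[OF inj] emp_mean_def)
    have mean_K: "(\<Sum>i\<in>K. \<integral>x. x \<partial>sample_factors A D i) = k * arm_mean D a"
      using a by (simp add: K_def sum.reindex[OF inj] sample_factors_def arm_mean_def)
    have factor: "sample_factors A D (a, j) = D a" for j
      using a by (simp add: sample_factors_def)
    have unit: "AE x in sample_factors A D i. x \<in> {0..1}" if "i \<in> K" for i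
    proof -
      obtain j where "i = (a, j)" using \<open>i \<in> K\<close> by (auto simp: K_def)
      show ?thesis unfolding \<open>i = (a, j)\<close> factor by (rule arm_unit[OF a])
    qed
    have sets_K: "sets (sample_factors A D i) = sets borel" if "i \<in> K" for i
      using that a by (auto simp: K_def factor sets_arm)
    have "0 \<le> k * s" using s by simp
    note H = hoeffding_components[OF product_prob_space_factors K(1-3) sets_K unit this,
        unfolded mean_K K(4) sample_space_eq_PiM[symmetric]]
    have exp_eq: "exp (- 2 * (k * s)\<^sup>2 / k) = exp (- 2 * real k * s\<^sup>2)"
      using False by (simp add: power2_eq_square)
    have "{\<omega> \<in> space \<Omega>. arm_mean D a + s \<le> emp_mean \<omega> a off k} =
        {\<omega> \<in> space \<Omega>. k * arm_mean D a + k * s \<le> (\<Sum>i\<in>K. \<omega> i)}"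
      "{\<omega> \<in> space \<Omega>. emp_mean \<omega> a off k \<le> arm_mean D a - s} =
        {\<omega> \<in> space \<Omega>. (\<Sum>i\<in>K. \<omega> i) \<le> k * arm_mean D a - k * s}"
      using False
      by (auto simp: sum_K distrib_left[symmetric] right_diff_distrib[symmetric] mult_le_cancel_left_pos)
    then show ?thesis using H exp_eq by simp
  qed (simp_all add: emp_mean_def)
  then show "prob {\<omega> \<in> space \<Omega>. arm_mean D a + s \<le> emp_mean \<omega> a off k} \<le> exp (- 2 * real k * s\<^sup>2)"
    and "prob {\<omega> \<in> space \<Omega>. emp_mean \<omega> a off k \<le> arm_mean D a - s} \<le> exp (- 2 * real k * s\<^sup>2)"
    by auto
qed

lemma prob_Int_eq_mult_if_disjoint_samples:
  assumes E: "E \<in> events" and F: "F \<in> events"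
    and J: "J\<^sub>E \<subseteq> A \<times> UNIV" "J\<^sub>F \<subseteq> A \<times> UNIV" "J\<^sub>E \<inter> J\<^sub>F = {}"
    and E_determined: "\<And>\<omega> \<omega>'. \<omega> \<in> space \<Omega> \<Longrightarrow> \<omega>' \<in> space \<Omega> \<Longrightarrow>
      (\<And>i. i \<in> J\<^sub>E \<Longrightarrow> \<omega> i = \<omega>' i) \<Longrightarrow> \<omega> \<in> E \<Longrightarrow> \<omega>' \<in> E"
    and F_determined: "\<And>\<omega> \<omega>'. \<omega> \<in> space \<Omega> \<Longrightarrow> \<omega>' \<in> space \<Omega> \<Longrightarrow>
      (\<And>i. i \<in> J\<^sub>F \<Longrightarrow> \<omega> i = \<omega>' i) \<Longrightarrow> \<omega> \<in> F \<Longrightarrow> \<omega>' \<in> F"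
  shows "prob (E \<inter> F) = prob E * prob F"
proof -
  interpret product_prob_space "sample_factors A D" "A \<times> UNIV"
    by (rule product_prob_space_factors)
  have "A \<times> (UNIV :: nat set) \<noteq> {}" using arms_nonempty by simp
  from measure_Int_eq_mult_if_disjoint_coordinates[OF this E[unfolded sample_space_eq_PiM]
      F[unfolded sample_space_eq_PiM] J E_determined[unfolded sample_space_eq_PiM]
      F_determined[unfolded sample_space_eq_PiM]]
  show ?thesis unfolding sample_space_eq_PiM .
qed

end

locale finite_arm_samples = arm_samples A D for A :: "'a::linorder set" and D +
  assumes finite_arms: "finite A"
begin

lemma measurable_emp_mean: "a \<in> A \<Longrightarrow> (\<lambda>\<omega>. emp_mean \<omega> a off k) \<in> borel_measurable \<Omega>"
  unfolding emp_mean_def using measurable_sample by measurable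

lemma sets_agg_set_eq: "{\<omega> \<in> space \<Omega>. agg_set \<omega> A \<epsilon> \<delta> i = S} \<in> events"
proof (induction i arbitrary: S)
  case 0
  then show ?case by (cases "A = S") auto
next
  case (Suc i)
  define k where "k = (\<lambda>B::'a set. nat \<lfloor>real (card B) * (\<delta> + phi (card A))\<rfloor>)"
  define X where "X = (\<lambda>(b::'a) (\<omega>::'a \<times> nat \<Rightarrow> real). emp_mean \<omega> b (agg_off \<epsilon> \<delta> i) ((i + 1) * agg_m \<epsilon> \<delta>))"
  have "{\<omega> \<in> space \<Omega>. agg_set \<omega> A \<epsilon> \<delta> (Suc i) = S} =
    (\<Union>B\<in>Pow A. {\<omega> \<in> space \<Omega>. agg_set \<omega> A \<epsilon> \<delta> i = B} \<inter>
        {\<omega> \<in> space \<Omega>. top_k (\<lambda>b. X b \<omega>) B (k B) \<in> {S}})"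
    using agg_set_subset[OF finite_arms] by (auto simp: Let_def k_def X_def)
  also have "\<dots> \<in> events"
  proof (intro sets.finite_UN sets.Int)
    fix B assume "B \<in> Pow A"
    then have "finite B" using finite_arms finite_subset by auto
    show "{\<omega> \<in> space \<Omega>. top_k (\<lambda>b. X b \<omega>) B (k B) \<in> {S}} \<in> events"
      using \<open>B \<in> Pow A\<close> measurable_emp_mean top_k_cong_order[OF \<open>finite B\<close>]
      by (intro sets_Collect_order_invariant[OF \<open>finite B\<close>]) (auto simp: X_def)
  qed (use Suc finite_arms in auto)
  finally show ?case .
qed

lemma sets_Collect_agg_set:
  assumes "\<And>S. S \<subseteq> A \<Longrightarrow> {\<omega> \<in> space \<Omega>. P S \<omega>} \<in> events"
  shows "{\<omega> \<in> space \<Omega>. P (agg_set \<omega> A \<epsilon> \<delta> i) \<omega>} \<in> events"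
proof -
  have "{\<omega> \<in> space \<Omega>. P (agg_set \<omega> A \<epsilon> \<delta> i) \<omega>} =
      (\<Union>S\<in>Pow A. {\<omega> \<in> space \<Omega>. agg_set \<omega> A \<epsilon> \<delta> i = S} \<inter> {\<omega> \<in> space \<Omega>. P S \<omega>})"
    using agg_set_subset[OF finite_arms] by auto
  also have "\<dots> \<in> events"
    using assms finite_arms sets_agg_set_eq by (intro sets.finite_UN sets.Int) auto
  finally show ?thesis .
qed

lemma sets_Collect_mem_agg_set:
  assumes "\<And>S. S \<subseteq> A \<Longrightarrow> H S \<in> events"
  shows "{\<omega> \<in> space \<Omega>. \<omega> \<in> H (agg_set \<omega> A \<epsilon> \<delta> i)} \<in> events"
proof (rule sets_Collect_agg_set[where P = "\<lambda>S \<omega>. \<omega> \<in> H S"])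
  fix S assume "S \<subseteq> A"
  then have "{\<omega> \<in> space \<Omega>. \<omega> \<in> H S} = H S" using sets.sets_into_space[OF assms] by auto
  then show "{\<omega> \<in> space \<Omega>. \<omega> \<in> H S} \<in> events" using assms[OF \<open>S \<subseteq> A\<close>] by simp
qed

lemma sets_naive_elim_eq:
  assumes "S \<subseteq> A"
  shows "{\<omega> \<in> space \<Omega>. naive_elim \<omega> S \<epsilon> \<delta> off = a} \<in> events"
proof -
  have "finite S" using assms finite_arms finite_subset by auto
  define X where "X = (\<lambda>(b::'a) (\<omega>::'a \<times> nat \<Rightarrow> real). emp_mean \<omega> b off (naive_N \<epsilon> \<delta> (card S)))"
  have "{\<omega> \<in> space \<Omega>. hd (rank_list (\<lambda>b. X b \<omega>) S) \<in> {a}} \<in> events"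
    using assms measurable_emp_mean
    by (intro sets_Collect_order_invariant[OF \<open>finite S\<close>])
      (auto simp: X_def intro: arg_cong[where f = hd] rank_list_cong_order[OF \<open>finite S\<close>])
  then show ?thesis by (simp add: naive_elim_def X_def)
qed

lemma sets_saba_eq: "{\<omega> \<in> space \<Omega>. saba \<omega> A \<epsilon> \<delta> = a} \<in> events"
  unfolding saba_def agg_elim_def
  by (rule sets_Collect_agg_set[where P = "\<lambda>S \<omega>. naive_elim \<omega> S \<epsilon> (\<delta> / exp 1)
    (agg_off \<epsilon> (\<delta> / 2) (Suc (t_rounds (\<delta> / 2) (card A)))) = a"], rule sets_naive_elim_eq)

end

section \<open>Correctness\<close>

locale bandit = finite_arm_samples +
  fixes astar and \<epsilon> :: real
  assumes best_arm: "astar \<in> A"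
    and gap: "\<And>a. a \<in> A \<Longrightarrow> a \<noteq> astar \<Longrightarrow> \<epsilon> < arm_mean D astar - arm_mean D a"
    and eps_pos: "0 < \<epsilon>"
begin

definition best_low :: "nat \<Rightarrow> nat \<Rightarrow> ('a \<times> nat \<Rightarrow> real) set" where
  "best_low off k = {\<omega> \<in> space \<Omega>. emp_mean \<omega> astar off k \<le> arm_mean D astar - \<epsilon> / 2}"

definition arm_high :: "'a \<Rightarrow> nat \<Rightarrow> nat \<Rightarrow> ('a \<times> nat \<Rightarrow> real) set" where
  "arm_high b off k = {\<omega> \<in> space \<Omega>. arm_mean D b + \<epsilon> / 2 \<le> emp_mean \<omega> b off k}"

lemma best_low_in_events: "best_low off k \<in> events"
  unfolding best_low_def using measurable_emp_mean[OF best_arm] by measurable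

lemma arm_high_in_events: "b \<in> A \<Longrightarrow> arm_high b off k \<in> events"
  unfolding arm_high_def using measurable_emp_mean by measurable

lemma prob_best_low_le: "prob (best_low off k) \<le> exp (- real k * \<epsilon>\<^sup>2 / 2)"
  using prob_emp_mean_le_le[OF best_arm, of "\<epsilon> / 2" off k] eps_pos
  by (simp add: best_low_def power_divide)

lemma prob_arm_high_le: "b \<in> A \<Longrightarrow> prob (arm_high b off k) \<le> exp (- real k * \<epsilon>\<^sup>2 / 2)"
  using prob_emp_mean_ge_le[of b "\<epsilon> / 2" off k] eps_pos
  by (simp add: arm_high_def power_divide)

lemma emp_mean_less_best:
  assumes "b \<in> A" "b \<noteq> astar" "\<omega> \<in> space \<Omega>" "\<omega> \<notin> best_low off k" "\<omega> \<notin> arm_high b off k"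
  shows "emp_mean \<omega> b off k < emp_mean \<omega> astar off k"
  using assms gap[of b] by (simp add: best_low_def arm_high_def)

lemma eps_less_1: "2 \<le> card A \<Longrightarrow> \<epsilon> < 1"
proof -
  assume "2 \<le> card A"
  then obtain b where "b \<in> A" "b \<noteq> astar"
    using best_arm by (metis card_le_Suc0_iff_eq finite_arms not_less_eq_eq numeral_2_eq_2)
  then show ?thesis
    using gap[of b] arm_mean_nonneg[of b] arm_mean_le_1[OF best_arm] by linarith
qed

lemma arm_high_determined:
  assumes "\<omega> \<in> arm_high b off k" "\<omega>' \<in> space \<Omega>"
    and "\<And>j. off \<le> j \<Longrightarrow> j < off + k \<Longrightarrow> \<omega> (b, j) = \<omega>' (b, j)"
  shows "\<omega>' \<in> arm_high b off k"
  using assms emp_mean_cong[of off k \<omega> b \<omega>'] by (simp add: arm_high_def)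

lemma
  assumes "\<omega> \<in> space \<Omega>" "\<omega>' \<in> space \<Omega>" "\<And>a j. a \<in> A \<Longrightarrow> off \<le> j \<Longrightarrow> \<omega> (a, j) = \<omega>' (a, j)"
  shows mem_best_low_iff: "\<omega> \<in> best_low off k \<longleftrightarrow> \<omega>' \<in> best_low off k"
    and mem_arm_high_iff: "b \<in> A \<Longrightarrow> \<omega> \<in> arm_high b off k \<longleftrightarrow> \<omega>' \<in> arm_high b off k"
  using assms best_arm emp_mean_cong[of off k \<omega> _ \<omega>'] by (auto simp: best_low_def arm_high_def)

definition many_high :: "'a set \<Rightarrow> nat \<Rightarrow> nat \<Rightarrow> nat \<Rightarrow> ('a \<times> nat \<Rightarrow> real) set" where
  "many_high S m off k = {\<omega> \<in> space \<Omega>. m \<le> card {b \<in> S - {astar}. \<omega> \<in> arm_high b off k}}"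

lemma many_high_in_events: "S \<subseteq> A \<Longrightarrow> many_high S m off k \<in> events"
  unfolding many_high_def using finite_subset[of S A] finite_arms
  by (intro sets_Collect_card_occurring_ge arm_high_in_events) auto

lemma prob_many_high_le:
  fixes p U :: real
  assumes S: "S \<subseteq> A" and p: "exp (- real k * \<epsilon>\<^sup>2 / 2) \<le> p"
    and U: "card S * p \<le> U" and m: "U < m"
  shows "prob (many_high S m off k) \<le> U / (m - U)\<^sup>2"
proof -
  have "prob {\<omega> \<in> space \<Omega>. real m \<le> card {b \<in> S - {astar}. \<omega> \<in> arm_high b off k}} \<le> U / (m - U)\<^sup>2"
  proof (rule prob_card_occurring_ge_le)
    show "finite (S - {astar})" using finite_subset[OF S finite_arms] by simp
    show "arm_high b off k \<in> events" if "b \<in> S - {astar}" for b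
      using that S by (intro arm_high_in_events) auto
    show "prob (arm_high b off k) \<le> p" if "b \<in> S - {astar}" for b
      using that S prob_arm_high_le[of b off k] p by auto
    have "0 \<le> p" using p by (meson exp_ge_zero order_trans)
    then show "card (S - {astar}) * p \<le> U"
      using U card_Diff1_le[of S astar] by (meson mult_right_mono of_nat_le_iff order_trans)
    show "prob (arm_high b off k \<inter> arm_high b' off k) = prob (arm_high b off k) * prob (arm_high b' off k)"
      if "b \<in> S - {astar}" "b' \<in> S - {astar}" "b \<noteq> b'" for b b'
      using that S
      by (intro prob_Int_eq_mult_if_disjoint_samples[where J\<^sub>E = "{b} \<times> {off..<off + k}"
          and J\<^sub>F = "{b'} \<times> {off..<off + k}"] arm_high_in_events)
        (auto elim!: arm_high_determined)
  qed (use m in auto)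
  then show ?thesis by (simp add: many_high_def)
qed

text \<open>Conditioning on the survivors of round \<open>i\<close>: they are determined by the samples
  before \<^term>\<open>agg_off \<epsilon> d i\<close>, hence independent of any event about later samples.\<close>

lemma prob_Collect_mem_agg_set_le:
  assumes H: "\<And>S. S \<subseteq> A \<Longrightarrow> H S \<in> events"
    and determined: "\<And>S \<omega> \<omega>'. S \<subseteq> A \<Longrightarrow> \<omega> \<in> space \<Omega> \<Longrightarrow> \<omega>' \<in> space \<Omega> \<Longrightarrow>
      (\<And>a j. a \<in> A \<Longrightarrow> agg_off \<epsilon> d i \<le> j \<Longrightarrow> \<omega> (a, j) = \<omega>' (a, j)) \<Longrightarrow> \<omega> \<in> H S \<Longrightarrow> \<omega>' \<in> H S"
    and bound: "\<And>\<omega>. \<omega> \<in> space \<Omega> \<Longrightarrow> prob (H (agg_set \<omega> A \<epsilon> d i)) \<le> \<beta>"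
  shows "prob {\<omega> \<in> space \<Omega>. \<omega> \<in> H (agg_set \<omega> A \<epsilon> d i)} \<le> \<beta>"
proof -
  define G where "G S = {\<omega> \<in> space \<Omega>. agg_set \<omega> A \<epsilon> d i = S}" for S
  have G: "G S \<in> events" for S unfolding G_def by (rule sets_agg_set_eq)
  have disjoint: "disjoint_family_on (\<lambda>S. G S \<inter> F S) (Pow A)" for F
    by (auto simp: disjoint_family_on_def G_def)
  have factor: "prob (G S \<inter> H S) \<le> prob (G S) * \<beta>" if "S \<subseteq> A" for S
  proof -
    have "prob (G S \<inter> H S) = prob (G S) * prob (H S)"
    proof (rule prob_Int_eq_mult_if_disjoint_samples[OF G H[OF that]])
      show "A \<times> {..<agg_off \<epsilon> d i} \<subseteq> A \<times> UNIV" "A \<times> {agg_off \<epsilon> d i..} \<subseteq> A \<times> UNIV"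
        "A \<times> {..<agg_off \<epsilon> d i} \<inter> A \<times> {agg_off \<epsilon> d i..} = {}" by auto
      show "\<omega>' \<in> G S" if "\<omega> \<in> space \<Omega>" "\<omega>' \<in> space \<Omega>" "\<omega> \<in> G S"
        and "\<And>x. x \<in> A \<times> {..<agg_off \<epsilon> d i} \<Longrightarrow> \<omega> x = \<omega>' x" for \<omega> \<omega>'
        using that agg_set_cong[OF finite_arms, of \<epsilon> d i \<omega> \<omega>'] by (auto simp: G_def)
      show "\<omega>' \<in> H S" if "\<omega> \<in> space \<Omega>" "\<omega>' \<in> space \<Omega>" "\<omega> \<in> H S"
        and "\<And>x. x \<in> A \<times> {agg_off \<epsilon> d i..} \<Longrightarrow> \<omega> x = \<omega>' x" for \<omega> \<omega>'
        using determined[OF \<open>S \<subseteq> A\<close> that(1,2) _ that(3)] that(4) by auto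
    qed
    also have "\<dots> \<le> prob (G S) * \<beta>"
    proof (cases "G S = {}")
      case False
      then obtain \<omega> where "\<omega> \<in> space \<Omega>" "agg_set \<omega> A \<epsilon> d i = S" by (auto simp: G_def)
      then show ?thesis using bound by (auto intro: mult_left_mono)
    qed simp
    finally show ?thesis .
  qed
  have "{\<omega> \<in> space \<Omega>. \<omega> \<in> H (agg_set \<omega> A \<epsilon> d i)} = (\<Union>S\<in>Pow A. G S \<inter> H S)"
    using agg_set_subset[OF finite_arms] sets.sets_into_space[OF H] by (auto simp: G_def)
  also have "prob \<dots> = (\<Sum>S\<in>Pow A. prob (G S \<inter> H S))"
    using G H finite_arms disjoint by (intro measure_finite_Union) (auto simp: emeasure_eq_measure)
  also have "\<dots> \<le> (\<Sum>S\<in>Pow A. prob (G S)) * \<beta>"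
    unfolding sum_distrib_right using factor by (intro sum_mono) auto
  also have "(\<Sum>S\<in>Pow A. prob (G S)) = prob (\<Union>S\<in>Pow A. G S \<inter> space \<Omega>)"
    using G finite_arms disjoint[of "\<lambda>_. space \<Omega>"] sets.sets_into_space[OF G]
    by (subst measure_finite_Union) (auto simp: emeasure_eq_measure Int_absorb2)
  also have "(\<Union>S\<in>Pow A. G S \<inter> space \<Omega>) = space \<Omega>"
    using agg_set_subset[OF finite_arms] by (auto simp: G_def)
  finally show ?thesis by (simp add: prob_space)
qed

lemma best_low_or_many_high_if_eliminated:
  fixes d :: real and i :: nat
  defines "off \<equiv> agg_off \<epsilon> d i" and "k \<equiv> (i + 1) * agg_m \<epsilon> d"
  assumes q: "0 \<le> d + phi (card A)" "d + phi (card A) \<le> 1"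
    and \<omega>: "\<omega> \<in> space \<Omega>" and best: "astar \<in> agg_set \<omega> A \<epsilon> d i"
    and eliminated: "astar \<notin> agg_set \<omega> A \<epsilon> d (Suc i)"
  shows "\<omega> \<in> best_low off k \<union> many_high (agg_set \<omega> A \<epsilon> d i) (agg_card (card A) (d + phi (card A)) (Suc i)) off k"
proof (rule ccontr)
  define X where "X = (\<lambda>b. emp_mean \<omega> b off k)"
  define S where "S = agg_set \<omega> A \<epsilon> d i"
  assume "\<omega> \<notin> best_low off k \<union> many_high S (agg_card (card A) (d + phi (card A)) (Suc i)) off k"
  then have not_low: "\<omega> \<notin> best_low off k"
    and few_high: "card {b \<in> S - {astar}. \<omega> \<in> arm_high b off k} < nat \<lfloor>real (card S) * (d + phi (card A))\<rfloor>"
    using \<omega> card_agg_set[OF finite_arms q] by (auto simp: many_high_def S_def not_le)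
  have "S \<subseteq> A" unfolding S_def by (rule agg_set_subset[OF finite_arms])
  then have "finite S" using finite_arms by (rule finite_subset)
  have "{b \<in> S - {astar}. X astar \<le> X b} \<subseteq> {b \<in> S - {astar}. \<omega> \<in> arm_high b off k}"
  proof (intro subsetI CollectI conjI)
    fix b assume b: "b \<in> {b \<in> S - {astar}. X astar \<le> X b}"
    then show "b \<in> S - {astar}" by simp
    show "\<omega> \<in> arm_high b off k"
    proof (rule ccontr)
      assume "\<omega> \<notin> arm_high b off k"
      moreover have "b \<in> A" "b \<noteq> astar" using b \<open>S \<subseteq> A\<close> by auto
      ultimately have "X b < X astar"
        unfolding X_def by (rule emp_mean_less_best[OF _ _ \<omega> not_low, rotated 2])
      then show False using b by simp
    qed
  qed
  then have "card {b \<in> S - {astar}. X astar \<le> X b} \<le> card {b \<in> S - {astar}. \<omega> \<in> arm_high b off k}"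
    using \<open>finite S\<close> by (intro card_mono) auto
  with few_high have "card {b \<in> S - {astar}. X astar \<le> X b} < nat \<lfloor>real (card S) * (d + phi (card A))\<rfloor>"
    by linarith
  then have "astar \<in> top_k X S (nat \<lfloor>real (card S) * (d + phi (card A))\<rfloor>)"
    using best by (intro mem_top_k_if_few_ahead \<open>finite S\<close>) (auto simp: S_def)
  with eliminated show False by (simp add: Let_def S_def[symmetric] X_def off_def k_def)
qed

lemma prob_best_eliminated_in_round_le:
  fixes d :: real
  defines "c \<equiv> agg_card (card A) (d + phi (card A))"
  assumes d: "0 < d" and q: "0 \<le> d + phi (card A)" "d + phi (card A) \<le> 1"
    and c: "c i * d ^ (i + 1) < c (Suc i)"
  shows "prob {\<omega> \<in> space \<Omega>. astar \<in> agg_set \<omega> A \<epsilon> d i \<and> astar \<notin> agg_set \<omega> A \<epsilon> d (Suc i)}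
    \<le> d ^ (i + 1) + c i * d ^ (i + 1) / (c (Suc i) - c i * d ^ (i + 1))\<^sup>2"
proof -
  define off where "off = agg_off \<epsilon> d i"
  define k where "k = (i + 1) * agg_m \<epsilon> d"
  define H where "H S = best_low off k \<union> many_high S (c (Suc i)) off k" for S
  have H_events: "H S \<in> events" if "S \<subseteq> A" for S
    unfolding H_def using best_low_in_events many_high_in_events[OF that] by (rule sets.Un)
  have p: "exp (- real k * \<epsilon>\<^sup>2 / 2) \<le> d ^ (i + 1)"
    unfolding k_def using exp_agg_m_le[OF eps_pos d] by simp
  have "prob {\<omega> \<in> space \<Omega>. astar \<in> agg_set \<omega> A \<epsilon> d i \<and> astar \<notin> agg_set \<omega> A \<epsilon> d (Suc i)}
      \<le> prob {\<omega> \<in> space \<Omega>. \<omega> \<in> H (agg_set \<omega> A \<epsilon> d i)}"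
    using best_low_or_many_high_if_eliminated[OF q]
    by (intro finite_measure_mono sets_Collect_mem_agg_set H_events) (auto simp: H_def c_def off_def k_def)
  also have "\<dots> \<le> d ^ (i + 1) + c i * d ^ (i + 1) / (c (Suc i) - c i * d ^ (i + 1))\<^sup>2"
  proof (rule prob_Collect_mem_agg_set_le[OF H_events])
    fix \<omega> assume "\<omega> \<in> space \<Omega>"
    define S where "S = agg_set \<omega> A \<epsilon> d i"
    have S: "S \<subseteq> A" "card S = c i"
      unfolding S_def c_def using agg_set_subset[OF finite_arms] card_agg_set[OF finite_arms q] by auto
    have "prob (H S) \<le> prob (best_low off k) + prob (many_high S (c (Suc i)) off k)"
      unfolding H_def by (rule measure_Un_le[OF best_low_in_events many_high_in_events[OF S(1)]])
    also have "\<dots> \<le> d ^ (i + 1) + c i * d ^ (i + 1) / (c (Suc i) - c i * d ^ (i + 1))\<^sup>2"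
      using prob_best_low_le[of off k] p prob_many_high_le[OF S(1) p _ c] S(2) by (intro add_mono) auto
    finally show "prob (H (agg_set \<omega> A \<epsilon> d i))
      \<le> d ^ (i + 1) + c i * d ^ (i + 1) / (c (Suc i) - c i * d ^ (i + 1))\<^sup>2" by (simp add: S_def)
  next
    fix S \<omega> \<omega>' assume "S \<subseteq> A" "\<omega> \<in> space \<Omega>" "\<omega>' \<in> space \<Omega>" "\<omega> \<in> H S"
      and same: "\<And>a j. a \<in> A \<Longrightarrow> agg_off \<epsilon> d i \<le> j \<Longrightarrow> \<omega> (a, j) = \<omega>' (a, j)"
    note agree = mem_best_low_iff[of \<omega> \<omega>' off, OF \<open>\<omega> \<in> space \<Omega>\<close> \<open>\<omega>' \<in> space \<Omega>\<close> same[folded off_def]]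
      mem_arm_high_iff[of \<omega> \<omega>' off, OF \<open>\<omega> \<in> space \<Omega>\<close> \<open>\<omega>' \<in> space \<Omega>\<close> same[folded off_def]]
    then have "{b \<in> S - {astar}. \<omega> \<in> arm_high b off k} = {b \<in> S - {astar}. \<omega>' \<in> arm_high b off k}"
      using \<open>S \<subseteq> A\<close> by auto
    then show "\<omega>' \<in> H S"
      using \<open>\<omega> \<in> H S\<close> \<open>\<omega>' \<in> space \<Omega>\<close> agree(1) by (auto simp: H_def many_high_def)
  qed
  finally show ?thesis .
qed

lemma naive_elim_finds_best:
  assumes \<omega>: "\<omega> \<in> space \<Omega>" and S: "S \<subseteq> A" "astar \<in> S"
    and not_low: "\<omega> \<notin> best_low off (naive_N \<epsilon> \<delta> (card S))"
    and not_high: "\<And>b. b \<in> S - {astar} \<Longrightarrow> \<omega> \<notin> arm_high b off (naive_N \<epsilon> \<delta> (card S))"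
  shows "naive_elim \<omega> S \<epsilon> \<delta> off = astar"
  unfolding naive_elim_def
proof (rule hd_rank_list_eq_if_max)
  show "finite S" using finite_subset[OF S(1) finite_arms] .
  show "emp_mean \<omega> b off (naive_N \<epsilon> \<delta> (card S)) < emp_mean \<omega> astar off (naive_N \<epsilon> \<delta> (card S))"
    if "b \<in> S" "b \<noteq> astar" for b
    using that S emp_mean_less_best[OF _ _ \<omega> not_low not_high] by auto
qed (use S in auto)

text \<open>Union bound: the sample size of Naive Elimination makes each of the \<open>card S\<close>
  estimates fail with probability at most \<open>\<delta> / card S\<close>.\<close>

lemma prob_naive_failure_event_le:
  assumes \<delta>: "0 < \<delta>" and S: "S \<subseteq> A" "astar \<in> S"
  defines "k \<equiv> naive_N \<epsilon> \<delta> (card S)"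
  shows "prob (best_low off k \<union> (\<Union>b\<in>S - {astar}. arm_high b off k)) \<le> \<delta>"
proof -
  have "finite S" using finite_subset[OF S(1) finite_arms] .
  with S have "card S > 0" using card_gt_0_iff by blast
  have p: "exp (- real k * \<epsilon>\<^sup>2 / 2) \<le> \<delta> / card S"
    unfolding k_def using exp_naive_N_le[OF eps_pos \<delta>] \<open>card S > 0\<close> by simp
  have "prob (best_low off k \<union> (\<Union>b\<in>S - {astar}. arm_high b off k))
      \<le> prob (best_low off k) + (\<Sum>b\<in>S - {astar}. prob (arm_high b off k))"
    using S \<open>finite S\<close>
    by (intro order_trans[OF measure_Un_le] add_left_mono measure_UNION_le best_low_in_events
        sets.finite_UN arm_high_in_events) auto
  also have "\<dots> \<le> \<delta> / card S + (\<Sum>b\<in>S - {astar}. \<delta> / card S)"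
    using prob_best_low_le prob_arm_high_le p S by (intro add_mono sum_mono order_trans[OF _ p]) auto
  also have "\<dots> = \<delta> / card S + (card S - 1) * (\<delta> / card S)"
    using S \<open>finite S\<close> \<open>card S > 0\<close> by (simp add: card_Diff_singleton of_nat_diff)
  also have "\<dots> = \<delta>" using \<open>card S > 0\<close> by (simp add: field_simps)
  finally show ?thesis .
qed

lemma prob_naive_elim_misses_best_le:
  assumes \<delta>: "0 < \<delta>"
  shows "prob {\<omega> \<in> space \<Omega>. astar \<in> agg_set \<omega> A \<epsilon> d r \<and>
      naive_elim \<omega> (agg_set \<omega> A \<epsilon> d r) \<epsilon> \<delta> (agg_off \<epsilon> d r) \<noteq> astar} \<le> \<delta>"
proof -
  define off where "off = agg_off \<epsilon> d r"
  define k where "k S = naive_N \<epsilon> \<delta> (card S)" for S :: "'a set"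
  define H where "H S = (if astar \<in> S then best_low off (k S) \<union> (\<Union>b\<in>S - {astar}. arm_high b off (k S))
    else {})" for S
  have H_events: "H S \<in> events" if "S \<subseteq> A" for S
    using that finite_subset[OF that finite_arms]
    by (auto simp: H_def intro!: sets.Un best_low_in_events sets.finite_UN arm_high_in_events)
  have "prob {\<omega> \<in> space \<Omega>. astar \<in> agg_set \<omega> A \<epsilon> d r \<and>
      naive_elim \<omega> (agg_set \<omega> A \<epsilon> d r) \<epsilon> \<delta> (agg_off \<epsilon> d r) \<noteq> astar}
    \<le> prob {\<omega> \<in> space \<Omega>. \<omega> \<in> H (agg_set \<omega> A \<epsilon> d r)}"
  proof (intro finite_measure_mono sets_Collect_mem_agg_set H_events subsetI CollectI conjI)
    fix \<omega> assume \<omega>: "\<omega> \<in> {\<omega> \<in> space \<Omega>. astar \<in> agg_set \<omega> A \<epsilon> d r \<and>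
      naive_elim \<omega> (agg_set \<omega> A \<epsilon> d r) \<epsilon> \<delta> (agg_off \<epsilon> d r) \<noteq> astar}"
    then show "\<omega> \<in> space \<Omega>" by simp
    show "\<omega> \<in> H (agg_set \<omega> A \<epsilon> d r)"
    proof (rule ccontr)
      assume "\<omega> \<notin> H (agg_set \<omega> A \<epsilon> d r)"
      with \<omega> have "naive_elim \<omega> (agg_set \<omega> A \<epsilon> d r) \<epsilon> \<delta> off = astar"
        by (intro naive_elim_finds_best agg_set_subset[OF finite_arms]) (auto simp: H_def k_def)
      with \<omega> show False by (simp add: off_def)
    qed
  qed (use finite_arms in auto)
  also have "\<dots> \<le> \<delta>"
  proof (rule prob_Collect_mem_agg_set_le[OF H_events])
    fix \<omega> assume "\<omega> \<in> space \<Omega>"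
    show "prob (H (agg_set \<omega> A \<epsilon> d r)) \<le> \<delta>"
      using prob_naive_failure_event_le[OF \<delta> agg_set_subset[OF finite_arms]] \<delta>
      by (simp add: H_def k_def)
  next
    fix S \<omega> \<omega>' assume "S \<subseteq> A" "\<omega> \<in> space \<Omega>" "\<omega>' \<in> space \<Omega>" "\<omega> \<in> H S"
      and same: "\<And>a j. a \<in> A \<Longrightarrow> agg_off \<epsilon> d r \<le> j \<Longrightarrow> \<omega> (a, j) = \<omega>' (a, j)"
    note agree = mem_best_low_iff[of \<omega> \<omega>' off, OF \<open>\<omega> \<in> space \<Omega>\<close> \<open>\<omega>' \<in> space \<Omega>\<close> same[folded off_def]]
      mem_arm_high_iff[of \<omega> \<omega>' off, OF \<open>\<omega> \<in> space \<Omega>\<close> \<open>\<omega>' \<in> space \<Omega>\<close> same[folded off_def]]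
    have "\<omega> \<in> arm_high b off (k S) \<longleftrightarrow> \<omega>' \<in> arm_high b off (k S)" if "b \<in> S" for b
      using that \<open>S \<subseteq> A\<close> agree(2) by blast
    then show "\<omega>' \<in> H S" using \<open>\<omega> \<in> H S\<close> agree(1) by (auto simp: H_def split: if_splits)
  qed
  finally show ?thesis .
qed

lemma prob_saba_wrong_le:
  fixes \<delta> :: real
  defines "d \<equiv> \<delta> / 2" and "t \<equiv> t_rounds (\<delta> / 2) (card A)"
  defines "c \<equiv> agg_card (card A) (d + phi (card A))"
  assumes \<delta>: "0 < \<delta>" and q: "0 \<le> d + phi (card A)" "d + phi (card A) \<le> 1"
    and c: "\<And>i. i \<le> t \<Longrightarrow> c i * d ^ (i + 1) < c (Suc i)"
  shows "prob {\<omega> \<in> space \<Omega>. saba \<omega> A \<epsilon> \<delta> \<noteq> astar}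
    \<le> (\<Sum>i\<le>t. d ^ (i + 1) + c i * d ^ (i + 1) / (c (Suc i) - c i * d ^ (i + 1))\<^sup>2) + \<delta> / exp 1"
proof -
  define R where "R i = {\<omega> \<in> space \<Omega>. astar \<in> agg_set \<omega> A \<epsilon> d i \<and> astar \<notin> agg_set \<omega> A \<epsilon> d (Suc i)}"
    for i
  define N where "N = {\<omega> \<in> space \<Omega>. astar \<in> agg_set \<omega> A \<epsilon> d (Suc t) \<and>
    naive_elim \<omega> (agg_set \<omega> A \<epsilon> d (Suc t)) \<epsilon> (\<delta> / exp 1) (agg_off \<epsilon> d (Suc t)) \<noteq> astar}"
  have R_events: "R i \<in> events" for i
  proof -
    have "{\<omega> \<in> space \<Omega>. astar \<in> agg_set \<omega> A \<epsilon> d i \<and> astar \<notin> S} \<in> events" for S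
      by (rule sets_Collect_agg_set[where P = "\<lambda>S' \<omega>. astar \<in> S' \<and> astar \<notin> S"]) simp
    then show ?thesis unfolding R_def
      by (rule sets_Collect_agg_set[where P = "\<lambda>S \<omega>. astar \<in> agg_set \<omega> A \<epsilon> d i \<and> astar \<notin> S"])
  qed
  have N_events: "N \<in> events"
    unfolding N_def
    by (rule sets_Collect_agg_set[where P = "\<lambda>S \<omega>. astar \<in> S \<and>
        naive_elim \<omega> S \<epsilon> (\<delta> / exp 1) (agg_off \<epsilon> d (Suc t)) \<noteq> astar"])
      (use sets_naive_elim_eq in \<open>auto intro: sets.sets_Collect_neg\<close>)
  have "{\<omega> \<in> space \<Omega>. saba \<omega> A \<epsilon> \<delta> \<noteq> astar} \<subseteq> (\<Union>i\<le>t. R i) \<union> N"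
    using ex_round_eliminating[OF best_arm]
    by (fastforce simp: R_def N_def saba_def agg_elim_def d_def t_def less_Suc_eq_le)
  then have "prob {\<omega> \<in> space \<Omega>. saba \<omega> A \<epsilon> \<delta> \<noteq> astar} \<le> prob ((\<Union>i\<le>t. R i) \<union> N)"
    using R_events N_events by (intro finite_measure_mono) auto
  also have "\<dots> \<le> (\<Sum>i\<le>t. prob (R i)) + prob N"
    using R_events N_events
    by (intro order_trans[OF measure_Un_le] add_right_mono measure_UNION_le) auto
  also have "\<dots> \<le> (\<Sum>i\<le>t. d ^ (i + 1) + c i * d ^ (i + 1) / (c (Suc i) - c i * d ^ (i + 1))\<^sup>2)
      + \<delta> / exp 1"
  proof (intro add_mono sum_mono)
    fix i assume "i \<in> {..t}"
    have "0 < d" using \<delta> by (simp add: d_def)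
    from prob_best_eliminated_in_round_le[OF this q c[unfolded c_def]] \<open>i \<in> {..t}\<close>
    show "prob (R i) \<le> d ^ (i + 1) + c i * d ^ (i + 1) / (c (Suc i) - c i * d ^ (i + 1))\<^sup>2"
      by (simp add: R_def c_def)
  next
    show "prob N \<le> \<delta> / exp 1" unfolding N_def using \<delta> by (intro prob_naive_elim_misses_best_le) simp
  qed
  finally show ?thesis .
qed

end

section \<open>Numerical estimates\<close>

lemma power_ge_tangent:
  fixes w w\<^sub>0 :: real
  assumes "0 < w\<^sub>0" "w\<^sub>0 \<le> w" "1 \<le> k"
  shows "w\<^sub>0 ^ k + k * w\<^sub>0 ^ (k - 1) * (w - w\<^sub>0) \<le> w ^ k"
proof -
  have "1 + k * (w / w\<^sub>0 - 1) \<le> (1 + (w / w\<^sub>0 - 1)) ^ k"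
    by (rule Bernoulli_inequality) (use assms in \<open>simp add: field_simps\<close>)
  then have "w\<^sub>0 ^ k * (1 + k * (w / w\<^sub>0 - 1)) \<le> w\<^sub>0 ^ k * (w / w\<^sub>0) ^ k"
    using assms by (intro mult_left_mono) auto
  moreover have "w\<^sub>0 ^ k * (w / w\<^sub>0) ^ k = w ^ k" using assms(1) by (simp add: power_divide)
  moreover have "w\<^sub>0 ^ k * (1 + k * (w / w\<^sub>0 - 1)) = w\<^sub>0 ^ k + k * w\<^sub>0 ^ (k - 1) * (w - w\<^sub>0)"
  proof -
    have "w\<^sub>0 ^ k = w\<^sub>0 * w\<^sub>0 ^ (k - 1)"
      using assms(3) by (metis Suc_diff_le diff_Suc_1 power_Suc)
    then show ?thesis using assms(1) by (simp add: field_simps)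
  qed
  ultimately show ?thesis by simp
qed

lemma ln_le_mult_root_minus_one:
  fixes x k :: real
  assumes "0 < x" "0 < k"
  shows "ln x \<le> k * (x powr (1 / k) - 1)"
proof -
  have "ln x = k * ln (x powr (1 / k))" using assms by simp
  also have "\<dots> \<le> k * (x powr (1 / k) - 1)"
    using assms by (intro mult_left_mono ln_le_minus_one) auto
  finally show ?thesis .
qed

lemma exp_1_ge: "2718 / 1000 \<le> (exp 1 :: real)"
  using e_approx_32 by (simp add: abs_if split: if_splits)

lemma ln_2_le: "ln 2 \<le> (7 / 10 :: real)"
proof -
  have "(2::real) ^ 10 \<le> (2718 / 1000) ^ 7" by (simp add: power_divide)
  also have "\<dots> \<le> exp 1 ^ 7" using exp_1_ge by (intro power_mono) auto
  also have "\<dots> = exp (7 / 10) ^ 10" by (simp add: exp_of_nat_mult[symmetric])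
  finally have "2 \<le> exp (7 / 10 :: real)"
    using power_mono_iff[of "2 :: real" "exp (7 / 10)" 10] by simp
  then have "ln 2 \<le> ln (exp (7 / 10 :: real))" by (subst ln_le_cancel_iff) auto
  then show ?thesis by simp
qed

lemma exp_le_if_power_ge:
  fixes b :: real and m k :: nat
  assumes "(272 / 100) ^ m \<le> b ^ k" "0 \<le> b" "0 < k"
  shows "exp (m / k) \<le> b"
proof -
  have "exp (m / k) ^ k = exp 1 ^ m"
    using assms(3) by (simp add: exp_of_nat_mult[symmetric])
  also have "\<dots> \<le> (272 / 100) ^ m" using e_less_272 by (intro power_mono) auto
  finally have "exp (m / k) ^ k \<le> b ^ k" using assms(1) by (rule order_trans)
  then show ?thesis using assms power_mono_iff[of "exp (m / k)" b k] by simp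
qed

lemma power_ge_linear:
  fixes w w\<^sub>0 :: real
  assumes "0 < w\<^sub>0" "w\<^sub>0 \<le> w" "1 \<le> k" "a \<le> w\<^sub>0 ^ k" "b \<le> w\<^sub>0 ^ (k - 1)"
  shows "a + k * b * (w - w\<^sub>0) \<le> w ^ k"
proof -
  have "k * b * (w - w\<^sub>0) \<le> k * w\<^sub>0 ^ (k - 1) * (w - w\<^sub>0)"
    using assms by (intro mult_right_mono mult_left_mono) auto
  then show ?thesis using power_ge_tangent[OF assms(1-3)] assms(4) by linarith
qed

lemma polynomial_bounds_of_root:
  fixes w :: real
  assumes w: "1454 / 1000 \<le> w"
  shows "192 * (w - 1) \<le> 121 / 10000 * w ^ 24"
    and "(32 * w - 22) / 6 \<le> 21 / 1000 * w ^ 16"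
    and "675 / 10000 * (40 * w - 385 / 10) \<le> 88 / 1000 * w ^ 8"
    and "19 \<le> w ^ 8"
proof -
  have w\<^sub>0: "0 < (1454 / 1000 :: real)" by simp
  note linear = power_ge_linear[OF w\<^sub>0 w]
  have "7971 + real 24 * 5482 * (w - 1454 / 1000) \<le> w ^ 24"
    by (rule linear) (simp_all add: power_divide)
  then show "192 * (w - 1) \<le> 121 / 10000 * w ^ 24" using w by simp
  have "399 + real 16 * 274 * (w - 1454 / 1000) \<le> w ^ 16"
    by (rule linear) (simp_all add: power_divide)
  then show "(32 * w - 22) / 6 \<le> 21 / 1000 * w ^ 16" using w by simp
  have "1997 / 100 + real 8 * (137 / 10) * (w - 1454 / 1000) \<le> w ^ 8"
    by (rule linear) (simp_all add: power_divide)
  then have w8: "1997 / 100 + 8 * (137 / 10) * (w - 1454 / 1000) \<le> w ^ 8" by simp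
  then show "675 / 10000 * (40 * w - 385 / 10) \<le> 88 / 1000 * w ^ 8" using w by (simp add: algebra_simps)
  from w8 show "19 \<le> w ^ 8" using w by (simp add: algebra_simps)
qed

lemma sum_power_le_inverse:
  fixes r :: real
  assumes "0 \<le> r" "r < 1"
  shows "(\<Sum>i\<le>m. r ^ i) \<le> 1 / (1 - r)"
proof -
  have "(1 - r) * (\<Sum>i\<le>m. r ^ i) \<le> 1" using assms by (simp add: sum_gp_basic)
  then show ?thesis using assms by (simp add: field_simps)
qed

lemma real_nat_ceiling_le: "0 \<le> y \<Longrightarrow> real (nat \<lceil>y\<rceil>) \<le> y + 1"
  by linarith

lemma agg_card_Suc_le: "0 \<le> q \<Longrightarrow> real (agg_card n q (Suc i)) \<le> real (agg_card n q i) * q"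
  by simp

lemma agg_card_Suc_ge: "0 \<le> q \<Longrightarrow> real (agg_card n q i) * q - 1 \<le> real (agg_card n q (Suc i))"
  by simp

lemma agg_card_le: "0 \<le> q \<Longrightarrow> real (agg_card n q i) \<le> real n * q ^ i"
proof (induction i)
  case (Suc i)
  have "real (agg_card n q (Suc i)) \<le> real (agg_card n q i) * q" by (rule agg_card_Suc_le[OF Suc.prems])
  also have "\<dots> \<le> real n * q ^ i * q" using Suc by (intro mult_right_mono) auto
  finally show ?case by (simp add: algebra_simps)
qed simp

lemma agg_card_ge: "0 \<le> q \<Longrightarrow> q < 1 \<Longrightarrow> real n * q ^ i - 1 / (1 - q) \<le> real (agg_card n q i)"
proof (induction i)
  case (Suc i)
  have "(real n * q ^ i - 1 / (1 - q)) * q - 1 = real n * q ^ Suc i - 1 / (1 - q)"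
    using Suc.prems by (simp add: field_simps)
  moreover have "(real n * q ^ i - 1 / (1 - q)) * q \<le> real (agg_card n q i) * q"
    using Suc by (intro mult_right_mono) auto
  ultimately show ?case using agg_card_Suc_ge[OF Suc.prems(1), of n i] by linarith
qed simp

locale saba_parameters =
  fixes n :: nat and \<delta> :: real
  assumes delta_pos: "0 < \<delta>" and delta_le: "\<delta> \<le> 0.05" and n_ge: "1 / \<delta> ^ 4 \<le> real n"
begin

abbreviation "d \<equiv> \<delta> / 2"
abbreviation "q \<equiv> d + phi n"
abbreviation "c \<equiv> agg_card n q"
abbreviation "t \<equiv> t_rounds d n"

text \<open>With \<open>w = n\<^sup>1\<^sup>/\<^sup>3\<^sup>2\<close>, the bound \<open>ln n \<le> 32 (w - 1)\<close> turns every comparison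
  of \<open>ln n\<close> with a power of \<open>n\<close> needed below into a polynomial inequality in \<open>w\<close>.\<close>

definition w :: real where "w = real n powr (1 / 32)"

lemma n_ge_160000: "160000 \<le> real n"
proof -
  have "\<delta> ^ 4 \<le> (1 / 20) ^ 4" using delta_pos delta_le by (intro power_mono) auto
  then have "1 / (1 / 20) ^ 4 \<le> 1 / \<delta> ^ 4" using delta_pos by (intro divide_left_mono) auto
  then show ?thesis using n_ge by (simp add: power_divide)
qed

lemma n_pos: "0 < real n" using n_ge_160000 by simp

lemma
  shows w_pos: "0 < w" and n_eq_w_pow: "real n = w ^ 32"
    and ln_n_le_w: "ln n \<le> 32 * (w - 1)" and w_ge: "1454 / 1000 \<le> w"
proof -
  show "0 < w" using n_pos by (simp add: w_def)
  have w_pow: "w ^ k = real n powr (k / 32)" for k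
    using n_pos powr_power[of "real n" "1 / 32" k] by (simp add: w_def)
  show "real n = w ^ 32" using w_pow[of 32] n_pos by simp
  show "ln n \<le> 32 * (w - 1)" using ln_le_mult_root_minus_one[OF n_pos, of 32] by (simp add: w_def)
  show "1454 / 1000 \<le> w"
  proof (rule ccontr)
    assume "\<not> 1454 / 1000 \<le> w"
    then have "w ^ 32 < (1454 / 1000) ^ 32" using \<open>0 < w\<close> by (intro power_strict_mono) auto
    then show False using w_pow[of 32] n_ge_160000 n_pos by (simp add: power_divide)
  qed
qed

lemmas w_polynomial_bounds = polynomial_bounds_of_root[OF w_ge]

lemma ln_n_ge_10: "10 \<le> ln n"
  using exp_le_if_power_ge[of 10 160000 1] n_ge_160000 n_pos by (simp add: power_divide ln_ge_iff)

lemma w_pow_16_le: "w ^ 16 \<le> n * \<delta>\<^sup>2"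
proof -
  have "(w ^ 16) ^ 2 = real n" using n_eq_w_pow by (simp flip: power_mult)
  moreover have "real n \<le> (n * \<delta>\<^sup>2) ^ 2"
    using n_ge delta_pos n_pos by (simp add: field_simps power2_eq_square power4_eq_xxxx)
  ultimately show ?thesis using n_pos by (metis power2_le_imp_le zero_le_power2 mult_nonneg_nonneg of_nat_0_le_iff)
qed

lemma phi_sq: "(phi n)\<^sup>2 = 6 * ln n / w ^ 24"
proof -
  have "real n powr (3 / 4) = w ^ 24"
    using n_pos powr_power[of "real n" "1 / 32" 24] by (simp add: w_def)
  moreover have "0 \<le> 6 * ln n / real n powr (3 / 4)"
    using ln_n_ge_10 n_pos by (intro divide_nonneg_pos) auto
  ultimately show ?thesis by (simp add: phi_def)
qed

lemma phi_pos: "0 < phi n"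
proof -
  have "0 < ln (real n)" using ln_n_ge_10 by linarith
  then show ?thesis unfolding phi_def using n_pos by (intro real_sqrt_gt_zero divide_pos_pos) auto
qed

lemma phi_le: "phi n \<le> 11 / 100"
proof -
  have "(phi n)\<^sup>2 \<le> 6 * (32 * (w - 1)) / w ^ 24"
    unfolding phi_sq using ln_n_le_w w_pos by (intro divide_right_mono) auto
  also have "\<dots> \<le> (11 / 100)\<^sup>2" using w_polynomial_bounds(1) w_pos by (simp add: field_simps)
  finally show ?thesis by (rule power2_le_imp_le) simp
qed

lemma n_phi_sq: "n * (phi n)\<^sup>2 = 6 * ln n * w ^ 8"
proof -
  have "n * (phi n)\<^sup>2 = w ^ 32 * (6 * ln n / w ^ 24)" using phi_sq n_eq_w_pow by simp
  also have "\<dots> = 6 * ln n * w ^ 8" using w_pos by (simp add: field_simps flip: power_add)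
  finally show ?thesis .
qed

lemma d_pos: "0 < d" and d_le: "d \<le> 1 / 40"
  using delta_pos delta_le by auto

lemma q_pos: "0 < q" and q_le: "q \<le> 135 / 1000" and d_le_q: "d \<le> q" and phi_le_q: "phi n \<le> q"
  using d_pos d_le phi_pos phi_le by auto

lemma ln_inv_q_ge: "3 / 2 \<le> ln (1 / q)"
proof -
  have "exp (3 / 2) \<le> (5 :: real)"
    using exp_le_if_power_ge[of 3 5 2] by (simp add: power_divide)
  also have "5 \<le> 1 / q" using q_pos q_le by (simp add: field_simps)
  finally show ?thesis using ln_ge_iff[of "1 / q" "3 / 2"] q_pos by simp
qed

definition t_exact :: real where "t_exact = (ln n + 4 * ln 2) / (4 * ln (1 / q))"

lemma t_exact_pos: "0 < t_exact"
proof -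
  have "0 < ln (2 :: real)" by simp
  then have "0 < ln n + 4 * ln 2" using ln_n_ge_10 by linarith
  then show ?thesis unfolding t_exact_def using ln_inv_q_ge by (intro divide_pos_pos) auto
qed

lemma t_eq: "t = nat \<lceil>t_exact\<rceil>"
  unfolding t_rounds_def t_exact_def by simp

lemma t_exact_le_t: "t_exact \<le> t" and t_less: "t < t_exact + 1" and t_ge_1: "1 \<le> t"
  using t_exact_pos t_eq by linarith+

lemma t_le: "t \<le> (32 * w - 22) / 6"
proof -
  have "t_exact \<le> (ln n + 4 * ln 2) / 6"
    unfolding t_exact_def using ln_inv_q_ge ln_n_ge_10 by (intro divide_left_mono) auto
  also have "\<dots> \<le> (32 * (w - 1) + 4 * (7 / 10)) / 6"
    using ln_n_le_w ln_2_le by (intro divide_right_mono) auto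
  finally show ?thesis using t_less by simp
qed

lemma ln_2_mult_w_pow_8: "ln (2 * w ^ 8) = (ln n + 4 * ln 2) / 4"
  using w_pos n_pos by (simp add: ln_mult ln_realpow w_def)

lemma q_pow_t_le: "q ^ t \<le> 1 / (2 * w ^ 8)"
proof -
  have "ln (q ^ t) = - t * ln (1 / q)" using q_pos by (simp add: ln_realpow ln_div)
  also have "\<dots> \<le> - t_exact * ln (1 / q)" using t_exact_le_t ln_inv_q_ge by (intro mult_right_mono) auto
  also have "\<dots> = ln (1 / (2 * w ^ 8))"
    unfolding t_exact_def using ln_inv_q_ge w_pos by (simp add: ln_div ln_2_mult_w_pow_8[symmetric])
  finally show ?thesis using q_pos w_pos by simp
qed

lemma q_pow_t_minus_1_ge: "1 / (2 * w ^ 8) \<le> q ^ (t - 1)"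
proof -
  have "ln (1 / (2 * w ^ 8)) = - t_exact * ln (1 / q)"
    unfolding t_exact_def using ln_inv_q_ge w_pos by (simp add: ln_div ln_2_mult_w_pow_8[symmetric])
  also have "\<dots> \<le> - real (t - 1) * ln (1 / q)"
    using t_less t_ge_1 ln_inv_q_ge by (intro mult_right_mono) (auto simp: of_nat_diff)
  also have "\<dots> = ln (q ^ (t - 1))" using q_pos by (simp add: ln_realpow ln_div)
  finally show ?thesis using q_pos w_pos by simp
qed

lemma n_q_pow_Suc_t_ge: "30 \<le> n * q ^ Suc t"
proof -
  have "Suc t = 2 + (t - 1)" using t_ge_1 by simp
  then have "n * q ^ Suc t = n * q\<^sup>2 * q ^ (t - 1)" by (simp only: power_add)
  also have "\<dots> \<ge> n * q\<^sup>2 * (1 / (2 * w ^ 8))"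
    using q_pow_t_minus_1_ge n_pos by (intro mult_left_mono) auto
  finally have "n * q\<^sup>2 / (2 * w ^ 8) \<le> n * q ^ Suc t" by simp
  moreover have "n * (phi n)\<^sup>2 / (2 * w ^ 8) \<le> n * q\<^sup>2 / (2 * w ^ 8)"
    using phi_pos phi_le_q n_pos w_pos by (intro divide_right_mono mult_left_mono power_mono) auto
  moreover have "n * (phi n)\<^sup>2 / (2 * w ^ 8) = 3 * ln n"
    unfolding n_phi_sq using w_pos by simp
  ultimately show ?thesis using ln_n_ge_10 by linarith
qed

lemma c_le: "c i \<le> n * q ^ i" using agg_card_le q_pos by simp
lemma c_ge: "n * q ^ i - 1 / (1 - q) \<le> c i" using agg_card_ge q_pos q_le by simp
lemma c_Suc_ge: "c i * q - 1 \<le> c (Suc i)" using agg_card_Suc_ge q_pos by simp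

lemma inv_one_minus_q_le: "1 / (1 - q) \<le> 2" "q / (1 - q) \<le> 1"
  using q_pos q_le by (simp_all add: field_simps)

lemma n_q_pow_ge: "i \<le> t \<Longrightarrow> 30 \<le> n * q ^ (i + 1)"
proof -
  assume "i \<le> t"
  then have "q ^ Suc t \<le> q ^ (i + 1)" using q_pos q_le by (intro power_decreasing) auto
  then have "n * q ^ Suc t \<le> n * q ^ (i + 1)" using n_pos by (simp add: mult_left_mono)
  then show ?thesis using n_q_pow_Suc_t_ge by linarith
qed

lemma c_mult_q_ge: "i \<le> t \<Longrightarrow> 10 \<le> c i * q"
proof -
  assume "i \<le> t"
  have "(n * q ^ i - 1 / (1 - q)) * q \<le> c i * q" using c_ge q_pos by (intro mult_right_mono) auto
  moreover have "(n * q ^ i - 1 / (1 - q)) * q = n * q ^ (i + 1) - q / (1 - q)" by (simp add: algebra_simps)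
  ultimately show ?thesis using n_q_pow_ge[OF \<open>i \<le> t\<close>] inv_one_minus_q_le by linarith
qed

lemma c_ge_half: "i \<le> t \<Longrightarrow> n * q ^ i / 2 \<le> c i"
proof -
  assume "i \<le> t"
  have "n * q ^ (i + 1) \<le> n * q ^ i" using q_pos q_le n_pos by (simp add: mult_left_le)
  then show ?thesis using n_q_pow_ge[OF \<open>i \<le> t\<close>] c_ge[of i] inv_one_minus_q_le by linarith
qed

lemma c_Suc_t_ge_1: "1 \<le> c (Suc t)"
  using c_ge[of "Suc t"] n_q_pow_Suc_t_ge inv_one_minus_q_le by linarith

lemma chebyshev_term_0:
  shows "c 0 * d < c 1"
    and "c 0 * d / (c 1 - c 0 * d)\<^sup>2 \<le> \<delta> / 500"
proof -
  have "n * (phi n)\<^sup>2 \<ge> 6 * 10 * 19"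
    unfolding n_phi_sq using ln_n_ge_10 w_polynomial_bounds(4) by (intro mult_mono) auto
  moreover have "n * (phi n)\<^sup>2 \<le> n * phi n"
    using phi_pos phi_le n_pos by (intro mult_left_mono) (auto simp: power2_eq_square mult_left_le)
  ultimately have "1140 \<le> n * phi n" "1140 \<le> n * (phi n)\<^sup>2" by auto
  then have gap: "n * phi n / 2 \<le> c 1 - n * d" using c_Suc_ge[of 0] by (simp add: algebra_simps)
  then show "c 0 * d < c 1" using \<open>1140 \<le> n * phi n\<close> by simp
  have "real (c 0) = n" by simp
  then have "c 0 * d / (c 1 - c 0 * d)\<^sup>2 \<le> n * d / (n * phi n / 2)\<^sup>2"
    using gap \<open>1140 \<le> n * phi n\<close> n_pos d_pos
    by (simp only:) (intro divide_left_mono power_mono mult_pos_pos, auto)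
  also have "\<dots> = 4 * d / (n * (phi n)\<^sup>2)"
    using n_pos phi_pos by (simp add: field_simps power2_eq_square)
  also have "\<dots> \<le> 4 * d / 1140"
    using \<open>1140 \<le> n * (phi n)\<^sup>2\<close> d_pos by (intro divide_left_mono) auto
  also have "\<dots> \<le> \<delta> / 500" using delta_pos by simp
  finally show "c 0 * d / (c 1 - c 0 * d)\<^sup>2 \<le> \<delta> / 500" .
qed

lemma chebyshev_term_Suc:
  assumes "1 \<le> i" and "i \<le> t"
  shows "c i * d ^ (i + 1) < c (Suc i)"
    and "c i * d ^ (i + 1) / (c (Suc i) - c i * d ^ (i + 1))\<^sup>2 \<le> (256 / 49) / (n * \<delta>)"
proof -
  define p where "p = d ^ (i + 1)"
  have "0 < p" using d_pos by (simp add: p_def)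
  have "p \<le> d\<^sup>2" unfolding p_def using d_pos d_le assms(1) by (intro power_decreasing) auto
  also have "\<dots> \<le> d * (1 / 40)"
    unfolding power2_eq_square using d_pos d_le by (intro mult_left_mono) auto
  also have "\<dots> \<le> q / 40" using d_le_q by simp
  finally have "p \<le> q / 40" .
  then have "c i * p \<le> c i * (q / 40)" by (intro mult_left_mono) auto
  then have gap: "7 / 8 * (c i * q) \<le> c (Suc i) - c i * p"
    using c_Suc_ge[of i] c_mult_q_ge[OF assms(2)] by linarith
  have "0 < c i * q" using c_mult_q_ge[OF assms(2)] by linarith
  moreover have "\<And>z a b :: real. 0 < z \<Longrightarrow> 7 / 8 * z \<le> a - b \<Longrightarrow> b < a" by linarith
  ultimately show "c i * d ^ (i + 1) < c (Suc i)" using gap unfolding p_def by blast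
  have "0 < real (c i)" using zero_less_mult_pos2[OF \<open>0 < c i * q\<close> q_pos] .
  have "c i * p / (c (Suc i) - c i * p)\<^sup>2 \<le> c i * p / (7 / 8 * (c i * q))\<^sup>2"
    using gap \<open>0 < c i * q\<close> \<open>0 < p\<close> \<open>0 < real (c i)\<close>
    by (intro divide_left_mono power_mono mult_pos_pos) auto
  also have "\<dots> = (64 / 49) * p / (c i * q\<^sup>2)"
  proof -
    have "u * p / (7 / 8 * (u * Q))\<^sup>2 = 64 / 49 * p / (u * Q\<^sup>2)" if "0 < u" "0 < Q" for u Q :: real
      using that by (simp add: field_simps power2_eq_square)
    then show ?thesis using \<open>0 < real (c i)\<close> q_pos by blast
  qed
  also have "\<dots> \<le> (64 / 49) * p / (n * q ^ i / 2 * q\<^sup>2)"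
    using c_ge_half[OF assms(2)] n_pos q_pos \<open>0 < p\<close> \<open>0 < real (c i)\<close>
    by (intro divide_left_mono mult_right_mono mult_pos_pos) auto
  also have "\<dots> = (128 / 49) * (p / q ^ (i + 1)) / (n * q)"
  proof -
    have "64 / 49 * p / (y * Q ^ i / 2 * Q\<^sup>2) = 128 / 49 * (p / Q ^ (i + 1)) / (y * Q)"
      if "0 < y" "0 < Q" for y Q :: real
      using that by (simp add: field_simps power2_eq_square)
    then show ?thesis using n_pos q_pos by blast
  qed
  also have "\<dots> \<le> (128 / 49) * 1 / (n * q)"
  proof -
    have "p \<le> q ^ (i + 1)" unfolding p_def using d_pos d_le_q by (intro power_mono) auto
    then show ?thesis using n_pos q_pos by (intro divide_right_mono mult_left_mono) auto
  qed
  also have "\<dots> \<le> (128 / 49) * 1 / (n * d)"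
    using n_pos d_pos d_le_q by (intro divide_left_mono mult_left_mono mult_pos_pos) auto
  also have "\<dots> = (256 / 49) / (n * \<delta>)" by simp
  finally show "c i * d ^ (i + 1) / (c (Suc i) - c i * d ^ (i + 1))\<^sup>2 \<le> (256 / 49) / (n * \<delta>)"
    by (simp add: p_def)
qed

lemma c_mult_d_pow_less: "i \<le> t \<Longrightarrow> c i * d ^ (i + 1) < c (Suc i)"
  using chebyshev_term_0(1) chebyshev_term_Suc(1)[of i] by (cases i) auto

lemma failure_budget:
  "(\<Sum>i\<le>t. d ^ (i + 1) + c i * d ^ (i + 1) / (c (Suc i) - c i * d ^ (i + 1))\<^sup>2) + \<delta> / exp 1 \<le> \<delta>"
proof -
  define \<beta> where "\<beta> i = c i * d ^ (i + 1) / (c (Suc i) - c i * d ^ (i + 1))\<^sup>2" for i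
  have "(\<Sum>i\<le>t. d ^ (i + 1)) = d * (\<Sum>i\<le>t. d ^ i)" by (simp add: sum_distrib_left)
  also have "\<dots> \<le> d * (1 / (1 - d))"
  proof -
    have "(1 - d) * (\<Sum>i\<le>t. d ^ i) \<le> 1" using d_pos by (simp add: sum_gp_basic)
    then show ?thesis using d_pos d_le by (intro mult_left_mono) (auto simp: field_simps)
  qed
  also have "\<dots> \<le> \<delta> * (20 / 39)" using d_pos d_le by (simp add: field_simps)
  finally have geometric: "(\<Sum>i\<le>t. d ^ (i + 1)) \<le> \<delta> * (20 / 39)" .
  have "(\<Sum>i\<le>t. \<beta> i) = \<beta> 0 + (\<Sum>i\<in>{1..t}. \<beta> i)"
    by (simp add: atMost_atLeast0 sum.atLeast_Suc_atMost)
  also have "\<dots> \<le> \<delta> / 500 + (\<Sum>i\<in>{1..t}. (256 / 49) / (n * \<delta>))"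
    using chebyshev_term_0(2) chebyshev_term_Suc(2) by (intro add_mono sum_mono) (auto simp: \<beta>_def)
  also have "\<dots> = \<delta> / 500 + t * ((256 / 49) / (n * \<delta>))" by simp
  also have "t * ((256 / 49) / (n * \<delta>)) \<le> (21 / 1000 * (n * \<delta>\<^sup>2)) * ((256 / 49) / (n * \<delta>))"
    using t_le w_polynomial_bounds(2) w_pow_16_le n_pos delta_pos
    by (intro mult_right_mono) auto
  also have "\<dots> \<le> 11 / 100 * \<delta>" using n_pos delta_pos by (simp add: field_simps power2_eq_square)
  finally have chebyshev: "(\<Sum>i\<le>t. \<beta> i) \<le> \<delta> / 500 + 11 / 100 * \<delta>" by simp
  have "\<delta> / exp 1 \<le> \<delta> * (1000 / 2718)"
    using exp_1_ge delta_pos by (simp add: field_simps)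
  then show ?thesis
    using geometric chebyshev delta_pos by (simp add: sum.distrib \<beta>_def)
qed

lemma ln_inv_delta_ge: "29 / 10 \<le> ln (1 / \<delta>)"
proof -
  have "exp (29 / 10) \<le> (20 :: real)"
    using exp_le_if_power_ge[of 29 20 10] by (simp add: power_divide)
  also have "20 \<le> 1 / \<delta>" using delta_pos delta_le by (simp add: field_simps)
  finally show ?thesis using ln_ge_iff[of "1 / \<delta>" "29 / 10"] delta_pos by simp
qed

lemma ln_inv_delta_le: "ln (1 / \<delta>) \<le> ln n / 4"
proof -
  have "(1 / \<delta>) ^ 4 \<le> n" using n_ge by (simp add: power_divide)
  then have "ln ((1 / \<delta>) ^ 4) \<le> ln n" using delta_pos n_pos by (subst ln_le_cancel_iff) auto
  then show ?thesis using delta_pos by (simp add: ln_realpow)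
qed

lemma sum_c_mult_Suc_le: "(\<Sum>i\<le>t. c i * real (i + 1)) \<le> n * (100 / 73)"
proof -
  have "real (i + 1) \<le> 2 ^ i" for i :: nat
    using less_exp[of i] by (metis Suc_eq_plus1 Suc_leI of_nat_le_iff of_nat_numeral of_nat_power)
  then have "(\<Sum>i\<le>t. c i * real (i + 1)) \<le> (\<Sum>i\<le>t. n * q ^ i * 2 ^ i)"
    using c_le q_pos n_pos by (intro sum_mono mult_mono) auto
  also have "\<dots> = n * (\<Sum>i\<le>t. (2 * q) ^ i)"
  proof -
    have "n * q ^ i * 2 ^ i = n * (2 * q) ^ i" for i by (simp only: power_mult_distrib mult_ac)
    then show ?thesis by (simp only: sum_distrib_left)
  qed
  also have "\<dots> \<le> n * (100 / 73)"
  proof -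
    have "(\<Sum>i\<le>t. (2 * q) ^ i) \<le> 1 / (1 - 2 * q)"
      by (rule sum_power_le_inverse) (use q_pos q_le in auto)
    also have "\<dots> \<le> 100 / 73"
    proof -
      have "1 / (1 - r) \<le> 100 / 73" if "r \<le> 27 / 100" for r :: real
        using that by (simp add: field_simps)
      then show ?thesis using q_le by simp
    qed
    finally have "(\<Sum>i\<le>t. (2 * q) ^ i) \<le> 100 / 73" .
    then show ?thesis using n_pos by simp
  qed
  finally show ?thesis .
qed

lemma c_Suc_t_le: "c (Suc t) \<le> n * (135 / 1000) / (2 * w ^ 8)"
proof -
  have "c (Suc t) \<le> n * q * q ^ t" using c_le[of "Suc t"] by simp
  also have "\<dots> \<le> n * (135 / 1000) * (1 / (2 * w ^ 8))"
    using q_pow_t_le q_pos q_le n_pos w_pos by (intro mult_mono) auto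
  finally show ?thesis by simp
qed

lemma two_div_square_ge:
  fixes \<epsilon> :: real
  assumes "0 < \<epsilon>" "\<epsilon> \<le> 1"
  shows "2 \<le> 2 / \<epsilon>\<^sup>2"
  using assms by (simp add: field_simps power_le_one)

lemma agg_m_le:
  assumes "0 < \<epsilon>" "\<epsilon> \<le> 1"
  shows "agg_m \<epsilon> d \<le> 2 / \<epsilon>\<^sup>2 * (ln (1 / \<delta>) + 12 / 10)"
proof -
  define E where "E = 2 / \<epsilon>\<^sup>2"
  have "2 \<le> E" unfolding E_def using two_div_square_ge[OF assms] .
  have "0 \<le> E * ln (1 / d)" using \<open>2 \<le> E\<close> d_pos d_le by simp
  then have "agg_m \<epsilon> d \<le> E * ln (1 / d) + 1"
    unfolding agg_m_def E_def using real_nat_ceiling_le by metis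
  also have "ln (1 / d) = ln 2 + ln (1 / \<delta>)" using delta_pos by (simp add: ln_div)
  also have "E * (ln 2 + ln (1 / \<delta>)) \<le> E * (ln (1 / \<delta>) + 7 / 10)"
    using ln_2_le \<open>2 \<le> E\<close> by (intro mult_left_mono) auto
  finally show ?thesis using \<open>2 \<le> E\<close> by (simp add: E_def algebra_simps)
qed

lemma agg_samples_le:
  assumes "0 < \<epsilon>" "\<epsilon> \<le> 1"
  shows "real (\<Sum>i\<le>t. c i * ((i + 1) * agg_m \<epsilon> d)) \<le> 2 / \<epsilon>\<^sup>2 * n * ((ln (1 / \<delta>) + 12 / 10) * (100 / 73))"
proof -
  have "real (\<Sum>i\<le>t. c i * ((i + 1) * agg_m \<epsilon> d)) = (\<Sum>i\<le>t. c i * real (i + 1)) * agg_m \<epsilon> d"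
    by (simp only: of_nat_sum of_nat_mult sum_distrib_right sum_distrib_left mult_ac)
  also have "\<dots> \<le> (n * (100 / 73)) * (2 / \<epsilon>\<^sup>2 * (ln (1 / \<delta>) + 12 / 10))"
    using sum_c_mult_Suc_le agg_m_le[OF assms] by (intro mult_mono) (auto intro!: sum_nonneg)
  finally show ?thesis by (simp only: mult_ac)
qed

lemma naive_samples_le:
  assumes "0 < \<epsilon>" "\<epsilon> \<le> 1"
  shows "real (c (Suc t) * naive_N \<epsilon> (\<delta> / exp 1) (c (Suc t))) \<le> 2 / \<epsilon>\<^sup>2 * n * (88 / 1000)"
proof -
  define E where "E = 2 / \<epsilon>\<^sup>2"
  define C where "C = real (c (Suc t))"
  have "2 \<le> E" unfolding E_def using two_div_square_ge[OF assms] .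
  have "1 \<le> C" using c_Suc_t_ge_1 by (simp add: C_def)
  have "ln (C / (\<delta> / exp 1)) = ln C + 1 + ln (1 / \<delta>)"
    using \<open>1 \<le> C\<close> delta_pos by (simp add: ln_div ln_mult)
  moreover have "0 \<le> ln C + 1 + ln (1 / \<delta>)" using \<open>1 \<le> C\<close> ln_inv_delta_ge by simp
  ultimately have "naive_N \<epsilon> (\<delta> / exp 1) (c (Suc t)) \<le> E * (ln C + 1 + ln (1 / \<delta>)) + 1"
    using \<open>2 \<le> E\<close> real_nat_ceiling_le unfolding naive_N_def E_def C_def
    by (metis mult_nonneg_nonneg zero_le_numeral order_trans)
  also have "\<dots> \<le> E * (40 * w - 385 / 10)"
  proof -
    have "q ^ Suc t \<le> 1" using q_pos q_le by (intro power_le_one) auto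
    then have "C \<le> n" using c_le[of "Suc t"] n_pos unfolding C_def
      by (meson mult_left_le of_nat_0_le_iff order_trans)
    then have "ln C \<le> ln n" using \<open>1 \<le> C\<close> by (subst ln_le_cancel_iff) auto
    then have "ln C + 1 + ln (1 / \<delta>) + 1 / 2 \<le> 40 * w - 385 / 10"
      using ln_inv_delta_le ln_n_le_w by simp
    then have "E * (ln C + 1 + ln (1 / \<delta>) + 1 / 2) \<le> E * (40 * w - 385 / 10)"
      using \<open>2 \<le> E\<close> by (intro mult_left_mono) auto
    then have "E * (ln C + 1 + ln (1 / \<delta>)) + E * (1 / 2) \<le> E * (40 * w - 385 / 10)"
      by (simp only: distrib_left)
    then show ?thesis using \<open>2 \<le> E\<close> by linarith
  qed
  finally have "C * naive_N \<epsilon> (\<delta> / exp 1) (c (Suc t)) \<le> C * (E * (40 * w - 385 / 10))"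
    using \<open>1 \<le> C\<close> by (intro mult_left_mono) auto
  also have "\<dots> \<le> (n * (135 / 1000) / (2 * w ^ 8)) * (E * (40 * w - 385 / 10))"
    using c_Suc_t_le \<open>2 \<le> E\<close> w_ge by (intro mult_right_mono) (auto simp: C_def)
  also have "\<dots> = E * n * (675 / 10000 * (40 * w - 385 / 10) / w ^ 8)"
    using w_pos by (simp add: field_simps)
  also have "\<dots> \<le> E * n * (88 / 1000)"
    using w_polynomial_bounds(3) w_pos \<open>2 \<le> E\<close> n_pos by (intro mult_left_mono) (auto simp: field_simps)
  finally show ?thesis by (simp add: C_def E_def)
qed

lemma saba_samples_le:
  assumes "0 < \<epsilon>" "\<epsilon> \<le> 1"
  shows "real (\<Sum>i\<le>t. c i * ((i + 1) * agg_m \<epsilon> d)) + real (c (Suc t) * naive_N \<epsilon> (\<delta> / exp 1) (c (Suc t)))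
    \<le> 4 * n / \<epsilon>\<^sup>2 * ln (1 / \<delta>)"
proof -
  have "real (\<Sum>i\<le>t. c i * ((i + 1) * agg_m \<epsilon> d)) + real (c (Suc t) * naive_N \<epsilon> (\<delta> / exp 1) (c (Suc t)))
      \<le> 2 / \<epsilon>\<^sup>2 * n * ((ln (1 / \<delta>) + 12 / 10) * (100 / 73)) + 2 / \<epsilon>\<^sup>2 * n * (88 / 1000)"
    by (rule add_mono[OF agg_samples_le[OF assms] naive_samples_le[OF assms]])
  also have "\<dots> = 2 / \<epsilon>\<^sup>2 * n * ((ln (1 / \<delta>) + 12 / 10) * (100 / 73) + 88 / 1000)"
    by (simp only: distrib_left)
  also have "\<dots> \<le> 2 / \<epsilon>\<^sup>2 * n * (2 * ln (1 / \<delta>))"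
    using ln_inv_delta_ge n_pos by (intro mult_left_mono) (auto simp: field_simps)
  also have "\<dots> = 4 * n / \<epsilon>\<^sup>2 * ln (1 / \<delta>)" by simp
  finally show ?thesis .
qed

end

theorem claim3:
  fixes A :: "'a::linorder set" and D :: "'a \<Rightarrow> real measure"
    and astar :: 'a and n :: nat and \<epsilon> \<delta> :: real
  assumes finA: "finite A" and cardA: "card A = n"
    and distr: "\<And>a. a \<in> A \<Longrightarrow> prob_space (D a)"
    and borel: "\<And>a. a \<in> A \<Longrightarrow> sets (D a) = sets borel"
    and supp: "\<And>a. a \<in> A \<Longrightarrow> (AE x in D a. x \<in> {0..1})"
    and best: "astar \<in> A" "\<And>a. a \<in> A \<Longrightarrow> arm_mean D a \<le> arm_mean D astar"
    and unique: "\<And>a. a \<in> A \<Longrightarrow> a \<noteq> astar \<Longrightarrow> arm_mean D astar - arm_mean D a > \<epsilon>"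
    and eps: "\<epsilon> > 0"
    and dpos: "\<delta> > 0" and dsmall: "\<delta> \<le> 0.05"
    and nlarge: "real n \<ge> max (1 / \<delta> ^ 4) (10 ^ 5)"
  shows "prob_space.prob (sample_space A D)
           {\<omega> \<in> space (sample_space A D).
              arm_mean D astar - arm_mean D (saba \<omega> A \<epsilon> \<delta>) \<le> \<epsilon>} \<ge> 1 - \<delta>
       \<and> (\<forall>\<omega> \<in> space (sample_space A D).
              real (saba_samples \<omega> A \<epsilon> \<delta>) \<le> 4 * real n / \<epsilon>\<^sup>2 * ln (1 / \<delta>))"
proof -
  interpret bandit A D astar \<epsilon>
    by (intro bandit.intro finite_arm_samples.intro bandit_axioms.intro finite_arm_samples_axioms.intro
        arm_samples.intro) (use finA distr borel supp best(1) unique eps in auto)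
  interpret saba_parameters n \<delta>
    using dpos dsmall nlarge by unfold_locales simp_all
  have q: "0 \<le> \<delta> / 2 + phi n" "\<delta> / 2 + phi n \<le> 1" using q_pos q_le by auto
  have wrong: "prob {\<omega> \<in> space \<Omega>. saba \<omega> A \<epsilon> \<delta> \<noteq> astar} \<le> \<delta>"
    by (rule order_trans[OF prob_saba_wrong_le[OF dpos, unfolded cardA, OF q c_mult_d_pow_less]
          failure_budget])
  have "space \<Omega> - {\<omega> \<in> space \<Omega>. saba \<omega> A \<epsilon> \<delta> = astar} = {\<omega> \<in> space \<Omega>. saba \<omega> A \<epsilon> \<delta> \<noteq> astar}"
    by auto
  then have correct: "1 - \<delta> \<le> prob {\<omega> \<in> space \<Omega>. saba \<omega> A \<epsilon> \<delta> = astar}"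
    using prob_compl[OF sets_saba_eq[of \<epsilon> \<delta> astar]] wrong by simp
  have "saba \<omega> A \<epsilon> \<delta> \<in> A" for \<omega>
    using saba_mem[OF finA] card_agg_set[OF finA, unfolded cardA, OF q] c_Suc_t_ge_1
    by (metis agg_elim_def card.empty cardA not_one_le_zero)
  then have "{\<omega> \<in> space \<Omega>. arm_mean D astar - arm_mean D (saba \<omega> A \<epsilon> \<delta>) \<le> \<epsilon>}
      = {\<omega> \<in> space \<Omega>. saba \<omega> A \<epsilon> \<delta> = astar}"
    using unique eps by force
  moreover have "real (saba_samples \<omega> A \<epsilon> \<delta>) \<le> 4 * real n / \<epsilon>\<^sup>2 * ln (1 / \<delta>)" for \<omega>
    using saba_samples_eq[OF finA, unfolded cardA, OF q] saba_samples_le[OF eps]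
      eps_less_1 n_ge_160000 cardA by simp
  ultimately show ?thesis using correct by simp
qed

end
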